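(* Consider the ROSS algorithm described in the context and suppose Assumptions (A1), (A2), (A3) hold. Then in each round $t\ge1$, $$\mathbb{E}\left[\left\|\frac1N\sum_{i=1}^N\left(\bar g^{[t]}_i-g^{[t]}_{i,i}\right)\right\|^2\right]\le\frac{2\sigma^2}{\omega_{min}^4}+\frac{2\sigma^2}{N}+\frac{8\varsigma^2}{\omega_{min}^4}+\frac{16L^2}{N\omega_{min}^4}\sum_{i=1}^N\mathbb{E}\left[\left\|x^{[t-1]}_i-\bar x^{[t-1]}\right\|^2\right]+\left(\frac{8}{\omega_{min}^4}+2\right)\mathbb{E}\left[\left\|\frac1N\sum_{i=1}^N\nabla f_i\left(x^{[t-1]}_i\right)\right\|^2\right].$$
   Context: Setting: $N\ge1$ agents $\mathcal{N}=\{1,\dots,N\}$. $\mathbf{W}=(\omega_{i,j})\in[0,1]^{N\times N}$ is a symmetric doubly stochastic matrix ($\omega_{i,j}=\omega_{j,i}$, $\sum_{j}\omega_{i,j}=1$). $\mathcal{N}_i=\{j\in\mathcal{N}:\omega_{i,j}>0\}$ is the neighborhood of agent $i$ (the algorithm treats $i$ itself as a member of $\mathcal{N}_i$), and $\omega_{min}=\min_{i\in\mathcal{N},j\in\mathcal{N}_i}\omega_{i,j}$. Agent $i$ has a data distribution $\mathcal{D}_i$; $F(x;\xi)$ is a real-valued loss, differentiable in $x\in\mathbb{R}^d$; $f_i(x)=\mathbb{E}_{\xi\sim\mathcal{D}_i}[F(x;\xi)]$ and $\mathcal{F}(x)=\frac1N\sum_{i=1}^N f_i(x)$. A finite validation set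 $\mathcal{Q}$ is available to every agent, and $J(\xi;x)$ denotes the accuracy of model $x$ on sample $\xi$. Algorithm ROSS (learning rate $\gamma>0$, momentum coefficient $\alpha$): all agents start from a common point $x_i^{[0]}=x^{[0]}$ with $u_i^{[0]}=0$. In each round $t=1,2,\dots$, each agent $i$ draws a sample $\xi_{i,t}\sim\mathcal{D}_i$ (independently across agents and rounds) and for each $j\in\mathcal{N}_i$ computes $g^{[t]}_{i,j}=\nabla F(x^{[t-1]}_j;\xi_{i,t})$ (so $g^{[t]}_{i,i}$ is its local stochastic gradient). Agent $i$ then sets $x^{[t]}_{i,j}=x^{[t-1]}_i-\gamma g^{[t]}_{j,i}$ for $j\in\mathcal{N}_i$; for $\mathcal{N}'\subseteq\mathcal{N}_i$ it defines $v(\mathcal{N}')=\frac{1}{|\mathcal{Q}|}\sum_{\xi\in\mathcal{Q}}J\big(\xi;\frac{1}{|\mathcal{N}'|}\sum_{j\in\mathcal{N}'}x^{[t]}_{i,j}\big)$ ($v(\emptyset)=0$); Shapley values $\varphi^{[t]}_{i,j}=\sum_{\mathcal{N}'\subseteq\mathcal{N}_i\setminus\{j\}}\frac{v(\mathcal{N}'\cup\{j\})-v(\mathcal{N}')}{|\mathcal{N}_i|\binom{|\mathcal{N}_i|-1}{|\mathcal{N}'|}}$; normalized values $\hat\varphi^{[t]}_{i,j}=\frac{\varphi^{[t]}_{i,j}-\min_{k\in\mathcal{N}_i}\varphi^{[t]}_{i,k}}{\max_{k\in\mathcal{N}_i}\varphi^{[t]}_{i,k}-\min_{k\in\mathcal{N}_i}\varphi^{[t]}_{i,k}}$;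 weights $\pi^{[t]}_{i,j}=\frac{\hat\varphi^{[t]}_{i,j}}{\omega_{i,j}\sum_{k\in\mathcal{N}_i}\hat\varphi^{[t]}_{i,k}}$; then $\bar g^{[t]}_i=\sum_{j\in\mathcal{N}_i}\pi^{[t]}_{i,j}g^{[t]}_{j,i}$, $\hat u^{[t]}_i=\alpha u^{[t-1]}_i+\bar g^{[t]}_i$, $\hat x^{[t]}_i=x^{[t-1]}_i-\gamma\hat u^{[t]}_i$, $u^{[t]}_i=\sum_{j\in\mathcal{N}_i}\omega_{i,j}\hat u^{[t]}_j$, $x^{[t]}_i=\sum_{j\in\mathcal{N}_i}\omega_{i,j}\hat x^{[t]}_j$. Write $\bar x^{[t]}=\frac1N\sum_{i=1}^N x^{[t]}_i$. Expectations are over the random samples. Assumptions: (A1) each $f_i$ is $L$-smooth. (A2) there exist $\sigma>0,\varsigma>0$ with $\mathbb{E}_{\xi\sim\mathcal{D}_i}\|\nabla F(x;\xi)-\nabla f_i(x)\|^2\le\sigma^2$ and $\|\nabla f_i(x)-\nabla\mathcal{F}(x)\|^2\le\varsigma^2$ for all $x$ and all $i$. (A3) with $\lambda_k(\mathbf{W})$ the $k$-th largest eigenvalue of $\mathbf{W}$, $\lambda_1(\mathbf{W})=1$ and $\max\{|\lambda_2(\mathbf{W})|,|\lambda_N(\mathbf{W})|\}\le\sqrt{\rho}$ for some constant $\rho<1$. *)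

theory Defs
  imports "HOL-Probability.Probability" "HOL-Computational_Algebra.Polynomial"
begin

definition nbhd :: "real^'n^'n \<Rightarrow> 'n \<Rightarrow> 'n set" where
  "nbhd W i = {j. 0 < W $ i $ j} \<union> {i}"

definition omega_min :: "real^'n^'n \<Rightarrow> real" where
  "omega_min W = Min {W $ i $ j | i j. 0 < W $ i $ j}"

definition doubly_stochastic_sym :: "real^('n::finite)^'n \<Rightarrow> bool" where
  "doubly_stochastic_sym W \<longleftrightarrow>
     (\<forall>i j. 0 \<le> W $ i $ j \<and> W $ i $ j \<le> 1) \<and>
     (\<forall>i j. W $ i $ j = W $ j $ i) \<and>
     (\<forall>i. (\<Sum>j\<in>UNIV. W $ i $ j) = 1)"

text \<open>Characteristic polynomial det(X I - W) and the eigenvalues, counted with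
  multiplicity, in non-increasing order; eig_k W k is the k-th largest (k >= 1).\<close>
definition char_poly_mat :: "real^('n::finite)^'n \<Rightarrow> real poly" where
  "char_poly_mat W = det (\<chi> i j. if i = j then [:- (W $ i $ j), 1:] else [:- (W $ i $ j):])"

definition eig_k :: "real^('n::finite)^'n \<Rightarrow> nat \<Rightarrow> real" where
  "eig_k W k = rev (sorted_list_of_multiset (proots (char_poly_mat W))) ! (k - 1)"

text \<open>State of the agents: (x, u).  xi a is the sample drawn by agent a in the current round.
  sg gradF x xi a b = g_{a,b} = nabla F(x_b ; xi_a).\<close>
definition sg :: "('v \<Rightarrow> 's \<Rightarrow> 'v) \<Rightarrow> ('n \<Rightarrow> 'v) \<Rightarrow> ('n \<Rightarrow> 's) \<Rightarrow> 'n \<Rightarrow> 'n \<Rightarrow> 'v" where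
  "sg gradF x xi a b = gradF (x b) (xi a)"

definition coal_val :: "('v::real_vector \<Rightarrow> 's \<Rightarrow> 'v) \<Rightarrow> ('s \<Rightarrow> 'v \<Rightarrow> real) \<Rightarrow> 's set \<Rightarrow> real
     \<Rightarrow> ('n \<Rightarrow> 'v) \<Rightarrow> ('n \<Rightarrow> 's) \<Rightarrow> 'n \<Rightarrow> 'n set \<Rightarrow> real" where
  "coal_val gradF J Q \<gamma> x xi i S =
     (if S = {} then 0 else
      (1 / real (card Q)) * (\<Sum>q\<in>Q. J q ((1 / real (card S)) *\<^sub>R
          (\<Sum>j\<in>S. x i - \<gamma> *\<^sub>R sg gradF x xi j i))))"

definition shapley :: "real^'n^'n \<Rightarrow> ('v::real_vector \<Rightarrow> 's \<Rightarrow> 'v) \<Rightarrow> ('s \<Rightarrow> 'v \<Rightarrow> real) \<Rightarrow> 's set \<Rightarrow> real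
     \<Rightarrow> ('n \<Rightarrow> 'v) \<Rightarrow> ('n \<Rightarrow> 's) \<Rightarrow> 'n \<Rightarrow> 'n \<Rightarrow> real" where
  "shapley W gradF J Q \<gamma> x xi i j =
     (\<Sum>S\<in>Pow (nbhd W i - {j}).
        (coal_val gradF J Q \<gamma> x xi i (insert j S) - coal_val gradF J Q \<gamma> x xi i S) /
        (real (card (nbhd W i)) * real (card (nbhd W i) - 1 choose card S)))"

definition shapley_norm :: "real^'n^'n \<Rightarrow> ('v::real_vector \<Rightarrow> 's \<Rightarrow> 'v) \<Rightarrow> ('s \<Rightarrow> 'v \<Rightarrow> real) \<Rightarrow> 's set \<Rightarrow> real
     \<Rightarrow> ('n \<Rightarrow> 'v) \<Rightarrow> ('n \<Rightarrow> 's) \<Rightarrow> 'n \<Rightarrow> 'n \<Rightarrow> real" where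
  "shapley_norm W gradF J Q \<gamma> x xi i j =
     (let \<phi> = shapley W gradF J Q \<gamma> x xi i;
          mn = Min (\<phi> ` nbhd W i); mx = Max (\<phi> ` nbhd W i)
      in (\<phi> j - mn) / (mx - mn))"

definition ross_weight :: "real^'n^'n \<Rightarrow> ('v::real_vector \<Rightarrow> 's \<Rightarrow> 'v) \<Rightarrow> ('s \<Rightarrow> 'v \<Rightarrow> real) \<Rightarrow> 's set \<Rightarrow> real
     \<Rightarrow> ('n \<Rightarrow> 'v) \<Rightarrow> ('n \<Rightarrow> 's) \<Rightarrow> 'n \<Rightarrow> 'n \<Rightarrow> real" where
  "ross_weight W gradF J Q \<gamma> x xi i j =
     shapley_norm W gradF J Q \<gamma> x xi i j /
       (W $ i $ j * (\<Sum>k\<in>nbhd W i. shapley_norm W gradF J Q \<gamma> x xi i k))"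

definition ross_gbar :: "real^'n^'n \<Rightarrow> ('v::real_vector \<Rightarrow> 's \<Rightarrow> 'v) \<Rightarrow> ('s \<Rightarrow> 'v \<Rightarrow> real) \<Rightarrow> 's set \<Rightarrow> real
     \<Rightarrow> ('n \<Rightarrow> 'v) \<Rightarrow> ('n \<Rightarrow> 's) \<Rightarrow> 'n \<Rightarrow> 'v" where
  "ross_gbar W gradF J Q \<gamma> x xi i =
     (\<Sum>j\<in>nbhd W i. ross_weight W gradF J Q \<gamma> x xi i j *\<^sub>R sg gradF x xi j i)"

definition ross_step :: "real^'n^'n \<Rightarrow> ('v::real_vector \<Rightarrow> 's \<Rightarrow> 'v) \<Rightarrow> ('s \<Rightarrow> 'v \<Rightarrow> real) \<Rightarrow> 's set \<Rightarrow> real \<Rightarrow> real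
     \<Rightarrow> ('n \<Rightarrow> 'v) \<times> ('n \<Rightarrow> 'v) \<Rightarrow> ('n \<Rightarrow> 's) \<Rightarrow> ('n \<Rightarrow> 'v) \<times> ('n \<Rightarrow> 'v)" where
  "ross_step W gradF J Q \<gamma> \<alpha> st xi =
     (let x = fst st; u = snd st;
          uh = (\<lambda>i. \<alpha> *\<^sub>R u i + ross_gbar W gradF J Q \<gamma> x xi i);
          xh = (\<lambda>i. x i - \<gamma> *\<^sub>R uh i)
      in ((\<lambda>i. \<Sum>j\<in>nbhd W i. W $ i $ j *\<^sub>R xh j),
          (\<lambda>i. \<Sum>j\<in>nbhd W i. W $ i $ j *\<^sub>R uh j)))"

text \<open>ross_state ... xi t = (x^[t], u^[t]) where xi a t is the sample of agent a in round t
  (rounds t = 1, 2, ...); x^[0]_i = x0, u^[0]_i = 0.\<close>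
primrec ross_state :: "real^'n^'n \<Rightarrow> ('v::real_vector \<Rightarrow> 's \<Rightarrow> 'v) \<Rightarrow> ('s \<Rightarrow> 'v \<Rightarrow> real) \<Rightarrow> 's set \<Rightarrow> real \<Rightarrow> real
     \<Rightarrow> 'v \<Rightarrow> ('n \<Rightarrow> nat \<Rightarrow> 's) \<Rightarrow> nat \<Rightarrow> ('n \<Rightarrow> 'v) \<times> ('n \<Rightarrow> 'v)" where
  "ross_state W gradF J Q \<gamma> \<alpha> x0 xi 0 = (\<lambda>i. x0, \<lambda>i. 0)"
| "ross_state W gradF J Q \<gamma> \<alpha> x0 xi (Suc t) =
     ross_step W gradF J Q \<gamma> \<alpha> (ross_state W gradF J Q \<gamma> \<alpha> x0 xi t) (\<lambda>a. xi a (Suc t))"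

end

theory Submission
  imports Defs
begin

(* With u = 1 / omega_min, the normalised Shapley weights pi_ij of agent i are nonnegative,
   vanish outside the support of row i of W and sum to at most u.  Split bar g_i - g_ii into
   a noise part sum_j pi_ij (g_ji - grad f_j(x_i)) - (g_ii - grad f_i(x_i)) and a drift part
   sum_j pi_ij grad f_j(x_i) - grad f_i(x_i).  The models x^[t-1] depend only on the samples
   of earlier rounds, so every fresh sample xi_{j,t} contributes variance at most sigma^2 (A2),
   and the noise part contributes at most (3 u^3 + 6) sigma^2 <= 2 sigma^2 u^4.  The drift part
   is compared with the average gradient: heterogeneity (A2) bounds grad f_j - grad F, and
   Lipschitz continuity (A1) moves the evaluation points x_i to their average.  Finally,
   omega_min > 1/2 would force W to be a symmetric permutation matrix, whose eigenvalues are
   all +1 or -1; the spectral gap (A3) excludes this, so u >= 2, which lets the stated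
   constants absorb all lower-order terms. *)

lemma power2_norm_mean_le:
  fixes v :: "'i \<Rightarrow> 'v::real_normed_vector"
  shows "(norm ((1 / real (card A)) *\<^sub>R (\<Sum>i\<in>A. v i)))\<^sup>2
    \<le> (1 / real (card A)) * (\<Sum>i\<in>A. (norm (v i))\<^sup>2)"
proof (cases "card A = 0")
  case False
  then have c: "real (card A) > 0" by simp
  have "(norm (\<Sum>i\<in>A. v i))\<^sup>2 \<le> (\<Sum>i\<in>A. norm (v i))\<^sup>2"
    by (simp add: norm_sum power_mono)
  also have "\<dots> \<le> (\<Sum>i\<in>A. (norm (v i))\<^sup>2) * real (card A)"
    by (rule sum_squared_le_sum_of_squares)
  finally have "(norm (\<Sum>i\<in>A. v i))\<^sup>2 * real (card A) \<le> (\<Sum>i\<in>A. (norm (v i))\<^sup>2) * (real (card A))\<^sup>2"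
    using c by (simp add: power2_eq_square mult_right_mono mult.assoc[symmetric])
  then show ?thesis
    using c by (simp add: power_divide field_simps)
qed simp

lemma power2_norm_weighted_sum_le:
  fixes v :: "'i \<Rightarrow> 'v::real_normed_vector"
  assumes "\<And>i. i \<in> A \<Longrightarrow> 0 \<le> w i"
  shows "(norm (\<Sum>i\<in>A. w i *\<^sub>R v i))\<^sup>2 \<le> (\<Sum>i\<in>A. w i) * (\<Sum>i\<in>A. w i * (norm (v i))\<^sup>2)"
proof -
  have "norm (\<Sum>i\<in>A. w i *\<^sub>R v i) \<le> (\<Sum>i\<in>A. sqrt (w i) * (sqrt (w i) * norm (v i)))"
    using norm_sum[of "\<lambda>i. w i *\<^sub>R v i" A] assms
    by (simp add: mult.assoc[symmetric] cong: sum.cong)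
  then have "(norm (\<Sum>i\<in>A. w i *\<^sub>R v i))\<^sup>2 \<le> (\<Sum>i\<in>A. sqrt (w i) * (sqrt (w i) * norm (v i)))\<^sup>2"
    by (simp add: power_mono)
  also have "\<dots> \<le> (\<Sum>i\<in>A. (sqrt (w i))\<^sup>2) * (\<Sum>i\<in>A. (sqrt (w i) * norm (v i))\<^sup>2)"
    by (rule Cauchy_Schwarz_ineq_sum)
  also have "\<dots> = (\<Sum>i\<in>A. w i) * (\<Sum>i\<in>A. w i * (norm (v i))\<^sup>2)"
    using assms by (simp add: power_mult_distrib)
  finally show ?thesis .
qed

lemma power2_norm_add_le:
  fixes a b :: "'v::real_normed_vector"
  assumes "e > 0"
  shows "(norm (a + b))\<^sup>2 \<le> (1 + e) * (norm a)\<^sup>2 + (1 + 1 / e) * (norm b)\<^sup>2"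
proof -
  have "2 * (e * (norm a * norm b)) \<le> e * (e * (norm a)\<^sup>2) + (norm b)\<^sup>2"
    using sum_squares_ge_zero[of "e * norm a - norm b" 0] by (simp add: power2_eq_square algebra_simps)
  then have "2 * (norm a * norm b) \<le> e * (norm a)\<^sup>2 + (norm b)\<^sup>2 / e"
    using assms by (simp add: field_simps)
  moreover have "(norm (a + b))\<^sup>2 \<le> (norm a + norm b)\<^sup>2"
    by (simp add: norm_triangle_ineq power_mono)
  ultimately show ?thesis
    by (simp add: power2_sum algebra_simps)
qed

lemma power2_sum4_le: "((a::real) + b + c + d)\<^sup>2 \<le> 4 * (a\<^sup>2 + b\<^sup>2 + c\<^sup>2 + d\<^sup>2)"
proof -
  have "0 \<le> (a-b)\<^sup>2 + (a-c)\<^sup>2 + (a-d)\<^sup>2 + (b-c)\<^sup>2 + (b-d)\<^sup>2 + (c-d)\<^sup>2" by simp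
  then show ?thesis by (simp add: power2_eq_square algebra_simps)
qed

lemma four_mul_power2_le_power4:
  assumes "2 \<le> (u::real)"
  shows "4 * u\<^sup>2 \<le> u ^ 4"
proof -
  have "4 * u\<^sup>2 \<le> u\<^sup>2 * u\<^sup>2"
    using mult_right_mono[OF power_mono[OF assms, of 2], of "u\<^sup>2"] by simp
  then show ?thesis by (simp flip: power_add)
qed

lemma three_mul_power3_add_six_le_power4:
  assumes "2 \<le> (u::real)"
  shows "3 * u ^ 3 + 6 \<le> 2 * u ^ 4"
proof -
  have "8 \<le> u ^ 3" using power_mono[OF assms, of 3] by simp
  moreover have "u ^ 3 * 1 \<le> u ^ 3 * (2 * u - 3)" using assms \<open>8 \<le> u ^ 3\<close> by (intro mult_left_mono) auto
  ultimately show ?thesis by (simp add: algebra_simps power_Suc[symmetric] del: power_Suc)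
qed

lemma lipschitz_bound_nonneg:
  fixes f :: "'a::euclidean_space \<Rightarrow> 'b::real_normed_vector"
  assumes "\<And>x y. norm (f x - f y) \<le> L * norm (x - y)"
  shows "0 \<le> L"
proof -
  obtain b :: 'a where "b \<in> Basis" using nonempty_Basis by blast
  then have "0 < norm (b - 0)" by (simp add: nonzero_Basis)
  moreover have "0 \<le> L * norm (b - 0)" using assms[of b 0] norm_ge_zero order_trans by blast
  ultimately show ?thesis by (simp add: zero_le_mult_iff)
qed

lemma borel_measurable_lipschitz_bound:
  assumes "\<And>x y. norm (f x - f y) \<le> L * norm (x - y)" "0 \<le> L"
  shows "f \<in> borel_measurable borel"
proof -
  have "L-lipschitz_on UNIV f" using assms by (intro lipschitz_onI) (auto simp: dist_norm)
  then show ?thesis by (intro borel_measurable_continuous_onI lipschitz_on_continuous_on)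
qed

section \<open>Mixing matrix\<close>

lemma doubly_stochastic_symD:
  assumes "doubly_stochastic_sym W"
  shows "0 \<le> W $ i $ j" "W $ i $ j = W $ j $ i" "(\<Sum>j\<in>UNIV. W $ i $ j) = 1"
  using assms unfolding doubly_stochastic_sym_def by auto

lemma doubly_stochastic_sym_row_support:
  assumes "doubly_stochastic_sym W"
  obtains j where "0 < W $ i $ j"
proof -
  have "\<not> (\<forall>j. W $ i $ j \<le> 0)"
    using sum_nonpos[of UNIV "\<lambda>j. W $ i $ j"] doubly_stochastic_symD(3)[OF assms, of i] by auto
  then show thesis using that by (auto simp: not_le)
qed

lemma finite_positive_entries: "finite {W $ i $ j | i j. 0 < W $ i $ j}"
proof (rule finite_subset)
  show "{W $ i $ j | i j. 0 < W $ i $ j} \<subseteq> (\<lambda>(i, j). W $ i $ j) ` UNIV" by auto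
qed simp

lemma omega_min_le:
  assumes "0 < W $ i $ j"
  shows "omega_min W \<le> W $ i $ j"
  unfolding omega_min_def using assms by (intro Min_le finite_positive_entries) auto

lemma omega_min_pos:
  assumes "doubly_stochastic_sym W"
  shows "0 < omega_min W"
proof -
  obtain j0 where "0 < W $ undefined $ j0"
    using doubly_stochastic_sym_row_support[OF assms] by blast
  then have "{W $ i $ j | i j. 0 < W $ i $ j} \<noteq> {}" by blast
  then have "omega_min W \<in> {W $ i $ j | i j. 0 < W $ i $ j}"
    unfolding omega_min_def using Min_in[OF finite_positive_entries] by blast
  then show ?thesis by auto
qed

lemma card_row_support_le:
  assumes "doubly_stochastic_sym W"
  shows "real (card {j. 0 < W $ i $ j}) * omega_min W \<le> 1"
proof -
  have "real (card {j. 0 < W $ i $ j}) * omega_min W = (\<Sum>j | 0 < W $ i $ j. omega_min W)"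
    by simp
  also have "\<dots> \<le> (\<Sum>j | 0 < W $ i $ j. W $ i $ j)"
    by (intro sum_mono omega_min_le) simp
  also have "\<dots> \<le> (\<Sum>j\<in>UNIV. W $ i $ j)"
    by (intro sum_mono2) (auto simp: doubly_stochastic_symD(1)[OF assms])
  finally show ?thesis by (simp only: doubly_stochastic_symD(3)[OF assms])
qed

lemma mult_self_eq_mat_1_if_omega_min_gt_half:
  assumes ds: "doubly_stochastic_sym W" and om: "omega_min W > 1/2"
  shows "W ** W = mat 1"
proof -
  note W = doubly_stochastic_symD[OF ds]
  have single: "W $ i $ k = 0" if "0 < W $ i $ j" "k \<noteq> j" for i j k
  proof (rule ccontr)
    assume "W $ i $ k \<noteq> 0"
    then have "0 < W $ i $ k" using W(1)[of i k] by simp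
    have "W $ i $ j + W $ i $ k = (\<Sum>l\<in>{j, k}. W $ i $ l)" using that(2) by simp
    also have "\<dots> \<le> (\<Sum>l\<in>UNIV. W $ i $ l)" by (intro sum_mono2) (auto simp: W(1))
    finally show False
      using omega_min_le[OF that(1)] omega_min_le[OF \<open>0 < W $ i $ k\<close>] om W(3)[of i] by simp
  qed
  have perm: "\<exists>s. W $ i $ s = 1 \<and> (\<forall>k. k \<noteq> s \<longrightarrow> W $ i $ k = 0)" for i
  proof -
    obtain s where s: "0 < W $ i $ s" using doubly_stochastic_sym_row_support[OF ds] by blast
    then have "(\<Sum>k\<in>UNIV. W $ i $ k) = W $ i $ s"
      by (subst sum.remove[of UNIV s]) (auto simp: single intro: sum.neutral)
    then show ?thesis using s single W(3) by metis
  qed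
  have "(\<Sum>k\<in>UNIV. W $ i $ k * W $ k $ j) = (if i = j then 1 else 0)" for i j
  proof -
    obtain s where s: "W $ i $ s = 1" "\<And>k. k \<noteq> s \<Longrightarrow> W $ i $ k = 0" using perm[of i] by blast
    obtain s' where s': "W $ s $ s' = 1" "\<And>k. k \<noteq> s' \<Longrightarrow> W $ s $ k = 0" using perm[of s] by blast
    have "W $ s $ i = 1" using s W(2) by metis
    then have "s' = i" using s' by (metis zero_neq_one)
    have "(\<Sum>k\<in>UNIV. W $ i $ k * W $ k $ j) = W $ i $ s * W $ s $ j"
      using s(2) by (subst sum.remove[of UNIV s]) (auto intro: sum.neutral)
    then show ?thesis using s s' \<open>s' = i\<close> by auto
  qed
  then show ?thesis by (simp add: matrix_matrix_mult_def mat_def vec_eq_iff)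
qed

lemma degree_det_le:
  fixes A :: "'a::idom poly^'n::finite^'n"
  assumes "\<And>i j. degree (A $ i $ j) \<le> 1"
  shows "degree (det A) \<le> CARD('n)"
  unfolding det_def
proof (intro degree_sum_le)
  fix p assume "p \<in> {p. p permutes (UNIV :: 'n set)}"
  have "degree (\<Prod>i\<in>UNIV. A $ i $ p i) \<le> (\<Sum>i\<in>UNIV. degree (A $ i $ p i))"
    using degree_prod_sum_le[of UNIV "\<lambda>i. A $ i $ p i"] by (simp add: comp_def)
  also have "\<dots> \<le> CARD('n)"
    using sum_mono[of UNIV "\<lambda>i. degree (A $ i $ p i)" "\<lambda>_. 1"] assms by simp
  finally show "degree (of_int (sign p) * (\<Prod>i\<in>UNIV. A $ i $ p i)) \<le> CARD('n)"
    using degree_mult_le[of "of_int (sign p)" "\<Prod>i\<in>UNIV. A $ i $ p i"] by (simp add: of_int_poly)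
qed simp

lemma char_matrix_mult_conj_if_involution:
  fixes W :: "real^'n::finite^'n"
  assumes WW: "W ** W = mat 1"
  shows "(\<chi> i j. if i = j then [:- W $ i $ j, 1:] else [:- W $ i $ j:])
      ** (\<chi> i j. if i = j then [:W $ i $ j, 1:] else [:W $ i $ j:])
    = (\<chi> i j. if i = j then [:-1, 0, 1:] else 0)"
proof -
  define X :: "real poly" where "X = [:0, 1:]"
  have minus: "(if i = j then [:- W $ i $ j, 1:] else [:- W $ i $ j:]) = (if i = j then X else 0) - [:W $ i $ j:]"
    and plus: "(if i = j then [:W $ i $ j, 1:] else [:W $ i $ j:]) = (if i = j then X else 0) + [:W $ i $ j:]"
    for i j by (auto simp: X_def)
  have WW': "(\<Sum>k\<in>UNIV. W $ i $ k * W $ k $ j) = (if i = j then 1 else 0)" for i j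
    using WW by (simp add: vec_eq_iff matrix_matrix_mult_def mat_def)
  have "(\<Sum>k\<in>UNIV. ((if i = k then X else 0) - [:W $ i $ k:]) * ((if k = j then X else 0) + [:W $ k $ j:]))
      = (if i = j then [:-1, 0, 1:] else 0)" for i j
  proof -
    have expand: "((if i = k then X else 0) - [:W $ i $ k:]) * ((if k = j then X else 0) + [:W $ k $ j:])
        = (if i = k then (if k = j then X * X else 0) + X * [:W $ k $ j:] else 0)
          - (if k = j then X * [:W $ i $ k:] else 0) - [:W $ i $ k * W $ k $ j:]" for k
      by (cases "i = k"; cases "k = j") (simp_all add: algebra_simps)
    show ?thesis
      by (simp add: expand sum.distrib sum_subtractf sum_to_poly WW') (simp add: X_def)
  qed
  then show ?thesis by (simp add: matrix_matrix_mult_def vec_eq_iff minus plus)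
qed

lemma proots_char_poly_mat_if_involution:
  fixes W :: "real^'n::finite^'n"
  assumes WW: "W ** W = mat 1"
  shows "size (proots (char_poly_mat W)) = CARD('n)"
    and "set_mset (proots (char_poly_mat W)) \<subseteq> {1, -1}"
proof -
  define p where "p = char_poly_mat W"
  define r where "r = det (\<chi> i j. if i = j then [:W $ i $ j, 1:] else [:W $ i $ j:])"
  have pr: "p * r = [:-1, 1:] ^ CARD('n) * [:1, 1:] ^ CARD('n)"
    unfolding p_def r_def char_poly_mat_def
    by (simp add: det_mul[symmetric] char_matrix_mult_conj_if_involution[OF WW] det_diagonal
        flip: power_mult_distrib)
  then have p0: "p \<noteq> 0" and r0: "r \<noteq> 0" by auto
  have roots: "proots p + proots r = replicate_mset CARD('n) 1 + replicate_mset CARD('n) (-1)"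
    using arg_cong[OF pr, of proots] by (simp add: proots_mult p0 r0 proots_power)
  have "degree p \<le> CARD('n)" "degree r \<le> CARD('n)"
    unfolding p_def r_def char_poly_mat_def by (intro degree_det_le; simp)+
  then show "size (proots (char_poly_mat W)) = CARD('n)"
    using arg_cong[OF roots, of size] size_proots_le[of p] size_proots_le[of r] by (simp add: p_def)
  show "set_mset (proots (char_poly_mat W)) \<subseteq> {1, -1}"
    using arg_cong[OF roots, of set_mset] by (auto simp: p_def)
qed

lemma abs_eig_k_card_if_involution:
  fixes W :: "real^'n::finite^'n"
  assumes "W ** W = mat 1"
  shows "\<bar>eig_k W CARD('n)\<bar> = 1"
proof -
  define xs where "xs = rev (sorted_list_of_multiset (proots (char_poly_mat W)))"
  have "length xs = CARD('n)"
    using proots_char_poly_mat_if_involution(1)[OF assms]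
    unfolding xs_def by (metis length_rev mset_sorted_list_of_multiset size_mset)
  then have "eig_k W CARD('n) \<in> set xs"
    unfolding eig_k_def xs_def[symmetric] by (intro nth_mem) simp
  then have "eig_k W CARD('n) \<in> {1, -1}"
    using proots_char_poly_mat_if_involution(2)[OF assms] by (auto simp: xs_def)
  then show ?thesis by auto
qed

lemma omega_min_le_half:
  fixes W :: "real^'n::finite^'n"
  assumes "doubly_stochastic_sym W"
    and "max \<bar>eig_k W 2\<bar> \<bar>eig_k W CARD('n)\<bar> \<le> sqrt \<rho>" and "\<rho> < 1"
  shows "omega_min W \<le> 1/2"
proof (rule ccontr)
  assume "\<not> ?thesis"
  then have "\<bar>eig_k W CARD('n)\<bar> = 1"
    using assms(1) by (intro abs_eig_k_card_if_involution mult_self_eq_mat_1_if_omega_min_gt_half) simp_all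
  moreover have "sqrt \<rho> < 1" using assms(3) by simp
  ultimately show False using assms(2) by linarith
qed

lemma two_le_inverse_omega_min:
  assumes "doubly_stochastic_sym W" "omega_min W \<le> 1/2"
  shows "2 \<le> 1 / omega_min W"
  using omega_min_pos[OF assms(1)] assms(2) by (simp add: field_simps)

section \<open>Shapley weights\<close>

lemma sum_normalized_weights_le:
  fixes a w :: "'i \<Rightarrow> real"
  assumes "finite A" "B \<subseteq> A" "\<And>k. k \<in> A \<Longrightarrow> 0 \<le> a k"
    and "0 < c" "\<And>j. j \<in> B \<Longrightarrow> c \<le> w j"
  shows "(\<Sum>j\<in>B. a j / (w j * (\<Sum>k\<in>A. a k))) \<le> 1 / c"
proof (cases "(\<Sum>k\<in>A. a k) = 0")
  case False
  define S where "S = (\<Sum>k\<in>A. a k)"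
  have S: "0 < S" using False assms(3) sum_nonneg[of A a] by (simp add: S_def)
  have w: "0 < w j" if "j \<in> B" for j using assms(4) assms(5)[OF that] by simp
  have "(\<Sum>j\<in>B. a j / (w j * S)) \<le> (\<Sum>j\<in>B. a j / (c * S))"
    using assms S w by (intro sum_mono divide_left_mono mult_right_mono mult_pos_pos) auto
  also have "\<dots> = (\<Sum>j\<in>B. a j) / (c * S)" by (simp add: sum_divide_distrib)
  also have "\<dots> \<le> S / (c * S)"
    using assms S sum_mono2[of A B a] by (intro divide_right_mono) (auto simp: S_def)
  also have "\<dots> = 1 / c" using S by simp
  finally show ?thesis by (simp add: S_def)
qed (use assms(4) in simp)

lemma shapley_norm_nonneg:
  assumes "k \<in> nbhd W i"
  shows "0 \<le> shapley_norm W gradF J Q \<gamma> x xi i k"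
proof -
  define \<phi> where "\<phi> = shapley W gradF J Q \<gamma> x xi i"
  have "Min (\<phi> ` nbhd W i) \<le> \<phi> k" "\<phi> k \<le> Max (\<phi> ` nbhd W i)"
    using assms by (auto intro: Min_le Max_ge)
  then show ?thesis
    unfolding shapley_norm_def Let_def \<phi>_def[symmetric] by (intro divide_nonneg_nonneg) auto
qed

lemma ross_weight_nonneg:
  assumes "doubly_stochastic_sym W" "j \<in> nbhd W i"
  shows "0 \<le> ross_weight W gradF J Q \<gamma> x xi i j"
  unfolding ross_weight_def using assms doubly_stochastic_symD(1)[OF assms(1)]
  by (intro divide_nonneg_nonneg mult_nonneg_nonneg sum_nonneg shapley_norm_nonneg) auto

lemma sum_ross_weight_le:
  assumes "doubly_stochastic_sym W"
  shows "(\<Sum>j | 0 < W $ i $ j. ross_weight W gradF J Q \<gamma> x xi i j) \<le> 1 / omega_min W"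
  unfolding ross_weight_def
  by (rule sum_normalized_weights_le)
    (auto simp: nbhd_def shapley_norm_nonneg omega_min_pos[OF assms] omega_min_le)

lemma ross_weight_le:
  assumes "doubly_stochastic_sym W" "0 < W $ i $ j"
  shows "ross_weight W gradF J Q \<gamma> x xi i j \<le> 1 / omega_min W"
proof -
  have "ross_weight W gradF J Q \<gamma> x xi i j \<le> (\<Sum>j | 0 < W $ i $ j. ross_weight W gradF J Q \<gamma> x xi i j)"
    using assms by (intro member_le_sum ross_weight_nonneg) (auto simp: nbhd_def)
  then show ?thesis using sum_ross_weight_le[OF assms(1)] by (rule order_trans)
qed

text \<open>Agent i belongs to its own neighbourhood even when w_ii = 0; its weight pi_ii is then
  a division by zero, hence 0.\<close>
lemma ross_gbar_eq_sum_row_support: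
  assumes "doubly_stochastic_sym W"
  shows "ross_gbar W gradF J Q \<gamma> x xi i
    = (\<Sum>j | 0 < W $ i $ j. ross_weight W gradF J Q \<gamma> x xi i j *\<^sub>R sg gradF x xi j i)"
  unfolding ross_gbar_def
proof (rule sum.mono_neutral_right)
  show "\<forall>j\<in>nbhd W i - {j. 0 < W $ i $ j}. ross_weight W gradF J Q \<gamma> x xi i j *\<^sub>R sg gradF x xi j i = 0"
    using doubly_stochastic_symD(1)[OF assms, of i] by (auto simp: nbhd_def ross_weight_def order.order_iff_strict)
qed (auto simp: nbhd_def)

section \<open>Aggregation error for fixed models and samples\<close>

lemma power2_norm_mean_noise_le:
  fixes n :: "'n::finite \<Rightarrow> 'n \<Rightarrow> 'v::real_normed_vector"
  assumes "\<And>i j. j \<in> K i \<Longrightarrow> 0 \<le> p i j" "\<And>i j. j \<in> K i \<Longrightarrow> p i j \<le> u"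
    and "\<And>i. (\<Sum>j\<in>K i. p i j) \<le> u" "0 \<le> u"
  shows "(norm ((1 / real CARD('n)) *\<^sub>R (\<Sum>i\<in>UNIV. (\<Sum>j\<in>K i. p i j *\<^sub>R n j i) - n i i)))\<^sup>2
    \<le> 3 / 2 * u\<^sup>2 / real CARD('n) * (\<Sum>i\<in>UNIV. \<Sum>j\<in>K i. (norm (n j i))\<^sup>2)
      + 3 / real CARD('n) * (\<Sum>i\<in>UNIV. (norm (n i i))\<^sup>2)"
proof -
  have "(norm ((\<Sum>j\<in>K i. p i j *\<^sub>R n j i) - n i i))\<^sup>2
      \<le> 3 / 2 * u\<^sup>2 * (\<Sum>j\<in>K i. (norm (n j i))\<^sup>2) + 3 * (norm (n i i))\<^sup>2" for i
  proof -
    have "(norm (\<Sum>j\<in>K i. p i j *\<^sub>R n j i))\<^sup>2 \<le> (\<Sum>j\<in>K i. p i j) * (\<Sum>j\<in>K i. p i j * (norm (n j i))\<^sup>2)"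
      using assms(1) by (rule power2_norm_weighted_sum_le)
    also have "\<dots> \<le> u * (\<Sum>j\<in>K i. u * (norm (n j i))\<^sup>2)"
      using assms by (intro mult_mono sum_mono mult_right_mono sum_nonneg mult_nonneg_nonneg) auto
    finally have "(norm (\<Sum>j\<in>K i. p i j *\<^sub>R n j i))\<^sup>2 \<le> u\<^sup>2 * (\<Sum>j\<in>K i. (norm (n j i))\<^sup>2)"
      by (simp add: power2_eq_square sum_distrib_left mult.assoc)
    then show ?thesis
      using power2_norm_add_le[of "1/2" "\<Sum>j\<in>K i. p i j *\<^sub>R n j i" "- n i i"] by simp
  qed
  then have "(\<Sum>i\<in>UNIV. (norm ((\<Sum>j\<in>K i. p i j *\<^sub>R n j i) - n i i))\<^sup>2)
      \<le> (\<Sum>i\<in>UNIV. 3 / 2 * u\<^sup>2 * (\<Sum>j\<in>K i. (norm (n j i))\<^sup>2) + 3 * (norm (n i i))\<^sup>2)"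
    by (rule sum_mono)
  then have "(1 / real CARD('n)) * (\<Sum>i\<in>UNIV. (norm ((\<Sum>j\<in>K i. p i j *\<^sub>R n j i) - n i i))\<^sup>2)
      \<le> (1 / real CARD('n)) * (\<Sum>i\<in>UNIV. 3 / 2 * u\<^sup>2 * (\<Sum>j\<in>K i. (norm (n j i))\<^sup>2) + 3 * (norm (n i i))\<^sup>2)"
    by (rule mult_left_mono) simp
  also have "\<dots> = 3 / 2 * u\<^sup>2 / real CARD('n) * (\<Sum>i\<in>UNIV. \<Sum>j\<in>K i. (norm (n j i))\<^sup>2)
      + 3 / real CARD('n) * (\<Sum>i\<in>UNIV. (norm (n i i))\<^sup>2)"
    by (simp add: sum.distrib sum_distrib_left[symmetric] sum_divide_distrib[symmetric] distrib_left)
  finally show ?thesis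
    using power2_norm_mean_le[of "UNIV :: 'n set" "\<lambda>i. (\<Sum>j\<in>K i. p i j *\<^sub>R n j i) - n i i"]
    by simp
qed

lemma norm_weighted_sum_minus_le:
  fixes g :: "'j \<Rightarrow> 'v::real_normed_vector"
  assumes "\<And>j. j \<in> B \<Longrightarrow> 0 \<le> p j" "(\<Sum>j\<in>B. p j) \<le> u" "1 \<le> u"
    and dev: "\<And>j. norm (g j - c) \<le> \<zeta>"
  shows "norm ((\<Sum>j\<in>B. p j *\<^sub>R g j) - g i) \<le> u * norm c + 2 * u * \<zeta>"
proof -
  define s where "s = (\<Sum>j\<in>B. p j)"
  have "0 \<le> s" unfolding s_def using assms(1) by (rule sum_nonneg)
  have "0 \<le> \<zeta>" using dev[of i] norm_ge_zero order_trans by blast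
  have "(\<Sum>j\<in>B. p j *\<^sub>R g j) - g i = (s - 1) *\<^sub>R c + (\<Sum>j\<in>B. p j *\<^sub>R (g j - c)) - (g i - c)"
    by (simp add: s_def scaleR_diff_right sum_subtractf scaleR_left_diff_distrib scaleR_sum_left algebra_simps)
  also have "norm \<dots> \<le> \<bar>s - 1\<bar> * norm c + (\<Sum>j\<in>B. p j * norm (g j - c)) + norm (g i - c)"
    using norm_sum[of "\<lambda>j. p j *\<^sub>R (g j - c)" B] assms(1)
      norm_triangle_ineq4[of "(s - 1) *\<^sub>R c + (\<Sum>j\<in>B. p j *\<^sub>R (g j - c))" "g i - c"]
      norm_triangle_ineq[of "(s - 1) *\<^sub>R c" "\<Sum>j\<in>B. p j *\<^sub>R (g j - c)"]
    by (simp cong: sum.cong)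
  also have "\<dots> \<le> u * norm c + s * \<zeta> + u * \<zeta>"
  proof (intro add_mono mult_right_mono)
    show "\<bar>s - 1\<bar> \<le> u" using \<open>0 \<le> s\<close> assms(2,3) by (auto simp: s_def)
    show "(\<Sum>j\<in>B. p j * norm (g j - c)) \<le> s * \<zeta>"
      unfolding s_def sum_distrib_right using assms(1) dev by (intro sum_mono mult_left_mono) auto
    show "norm (g i - c) \<le> u * \<zeta>"
      using dev[of i] mult_right_mono[OF assms(3) \<open>0 \<le> \<zeta>\<close>] by simp
  qed simp
  also have "\<dots> \<le> u * norm c + 2 * u * \<zeta>"
    using mult_right_mono[OF assms(2) \<open>0 \<le> \<zeta>\<close>] by (simp add: s_def mult.commute)
  finally show ?thesis .
qed

lemma norm_mean_lipschitz_le: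
  fixes x :: "'n::finite \<Rightarrow> 'v::real_normed_vector" and gf :: "'n \<Rightarrow> 'v \<Rightarrow> 'w::real_normed_vector"
  assumes lip: "\<And>k y z. norm (gf k y - gf k z) \<le> L * norm (y - z)" and "0 \<le> L"
  shows "norm ((1 / real CARD('n)) *\<^sub>R (\<Sum>k\<in>UNIV. gf k (x i)))
    \<le> norm ((1 / real CARD('n)) *\<^sub>R (\<Sum>k\<in>UNIV. gf k (x k)))
      + L * norm (x i - c) + L / real CARD('n) * (\<Sum>k\<in>UNIV. norm (x k - c))"
proof -
  have "norm ((\<Sum>k\<in>UNIV. gf k (x i)) - (\<Sum>k\<in>UNIV. gf k (x k)))
      \<le> (\<Sum>k\<in>UNIV. L * (norm (x i - c) + norm (x k - c)))"
    unfolding sum_subtractf[symmetric]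
  proof (rule order_trans[OF norm_sum sum_mono])
    fix k
    have "norm (x i - x k) \<le> norm (x i - c) + norm (x k - c)"
      using norm_triangle_ineq4[of "x i - c" "x k - c"] by simp
    then show "norm (gf k (x i) - gf k (x k)) \<le> L * (norm (x i - c) + norm (x k - c))"
      using lip[of k "x i" "x k"] mult_left_mono[OF _ \<open>0 \<le> L\<close>] by (meson order_trans)
  qed
  also have "\<dots> = real CARD('n) * (L * norm (x i - c)) + L * (\<Sum>k\<in>UNIV. norm (x k - c))"
    by (simp add: sum.distrib sum_distrib_left distrib_left)
  finally have "norm ((1 / real CARD('n)) *\<^sub>R ((\<Sum>k\<in>UNIV. gf k (x i)) - (\<Sum>k\<in>UNIV. gf k (x k))))
      \<le> (1 / real CARD('n)) * (real CARD('n) * (L * norm (x i - c)) + L * (\<Sum>k\<in>UNIV. norm (x k - c)))"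
    by (simp add: divide_right_mono)
  also have "\<dots> = L * norm (x i - c) + L / real CARD('n) * (\<Sum>k\<in>UNIV. norm (x k - c))"
    by (simp add: distrib_left)
  finally show ?thesis
    using norm_triangle_ineq2[of "(1 / real CARD('n)) *\<^sub>R (\<Sum>k\<in>UNIV. gf k (x i))"
        "(1 / real CARD('n)) *\<^sub>R (\<Sum>k\<in>UNIV. gf k (x k))"]
    by (simp add: scaleR_diff_right)
qed

lemma norm_gradient_drift_le:
  fixes x :: "'n::finite \<Rightarrow> 'v::real_normed_vector" and gf :: "'n \<Rightarrow> 'v \<Rightarrow> 'w::real_normed_vector"
  assumes "\<And>j. j \<in> B \<Longrightarrow> 0 \<le> p j" "(\<Sum>j\<in>B. p j) \<le> u" "1 \<le> u"
    and lip: "\<And>k y z. norm (gf k y - gf k z) \<le> L * norm (y - z)" and "0 \<le> L"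
    and het: "\<And>i y. norm (gf i y - (1 / real CARD('n)) *\<^sub>R (\<Sum>k\<in>UNIV. gf k y)) \<le> \<zeta>"
  shows "norm ((\<Sum>j\<in>B. p j *\<^sub>R gf j (x i)) - gf i (x i))
    \<le> u * norm ((1 / real CARD('n)) *\<^sub>R (\<Sum>k\<in>UNIV. gf k (x k)))
      + u * (L * norm (x i - c) + L / real CARD('n) * (\<Sum>k\<in>UNIV. norm (x k - c))) + 2 * u * \<zeta>"
proof -
  have "norm ((\<Sum>j\<in>B. p j *\<^sub>R gf j (x i)) - gf i (x i))
      \<le> u * norm ((1 / real CARD('n)) *\<^sub>R (\<Sum>k\<in>UNIV. gf k (x i))) + 2 * u * \<zeta>"
    using assms(1-3) het by (rule norm_weighted_sum_minus_le)
  also have "\<dots> \<le> u * (norm ((1 / real CARD('n)) *\<^sub>R (\<Sum>k\<in>UNIV. gf k (x k)))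
      + L * norm (x i - c) + L / real CARD('n) * (\<Sum>k\<in>UNIV. norm (x k - c))) + 2 * u * \<zeta>"
    using mult_left_mono[OF norm_mean_lipschitz_le[where gf=gf and x=x and i=i and c=c, OF lip \<open>0 \<le> L\<close>], of u]
      assms(3)
    by simp
  finally show ?thesis by (simp add: algebra_simps)
qed

lemma power2_norm_mean_drift_le:
  fixes x :: "'n::finite \<Rightarrow> 'v::real_normed_vector" and gf :: "'n \<Rightarrow> 'v \<Rightarrow> 'w::real_normed_vector"
  assumes "\<And>i j. j \<in> K i \<Longrightarrow> 0 \<le> p i j" "\<And>i. (\<Sum>j\<in>K i. p i j) \<le> u" "1 \<le> u"
    and lip: "\<And>k y z. norm (gf k y - gf k z) \<le> L * norm (y - z)" and "0 \<le> L"
    and het: "\<And>i y. norm (gf i y - (1 / real CARD('n)) *\<^sub>R (\<Sum>k\<in>UNIV. gf k y)) \<le> \<zeta>"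
  shows "(norm ((1 / real CARD('n)) *\<^sub>R (\<Sum>i\<in>UNIV. (\<Sum>j\<in>K i. p i j *\<^sub>R gf j (x i)) - gf i (x i))))\<^sup>2
    \<le> 4 * u\<^sup>2 * (norm ((1 / real CARD('n)) *\<^sub>R (\<Sum>i\<in>UNIV. gf i (x i))))\<^sup>2
      + 8 * u\<^sup>2 * L\<^sup>2 / real CARD('n) * (\<Sum>i\<in>UNIV. (norm (x i - c))\<^sup>2) + 16 * u\<^sup>2 * \<zeta>\<^sup>2"
proof -
  define N where "N = real CARD('n)"
  define P where "P = norm ((1 / N) *\<^sub>R (\<Sum>i\<in>UNIV. gf i (x i)))"
  define e where "e i = norm (x i - c)" for i
  define m where "m = (1 / N) * (\<Sum>k\<in>UNIV. e k)"
  define S where "S = (\<Sum>i\<in>UNIV. (e i)\<^sup>2)"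
  have "0 < N" by (simp add: N_def)
  have drift: "norm ((\<Sum>j\<in>K i. p i j *\<^sub>R gf j (x i)) - gf i (x i))
      \<le> u * P + u * L * e i + u * L * m + 2 * u * \<zeta>" for i
    using norm_gradient_drift_le[where x=x and i=i and c=c, OF assms(1,2,3) lip \<open>0 \<le> L\<close> het]
    by (simp add: N_def P_def e_def m_def algebra_simps)
  have "(norm ((\<Sum>j\<in>K i. p i j *\<^sub>R gf j (x i)) - gf i (x i)))\<^sup>2
      \<le> 4 * u\<^sup>2 * (P\<^sup>2 + L\<^sup>2 * (e i)\<^sup>2 + L\<^sup>2 * m\<^sup>2 + 4 * \<zeta>\<^sup>2)" for i
  proof -
    have "(norm ((\<Sum>j\<in>K i. p i j *\<^sub>R gf j (x i)) - gf i (x i)))\<^sup>2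
        \<le> (u * P + u * L * e i + u * L * m + 2 * u * \<zeta>)\<^sup>2"
      using drift by (simp add: power_mono)
    also have "\<dots> \<le> 4 * ((u * P)\<^sup>2 + (u * L * e i)\<^sup>2 + (u * L * m)\<^sup>2 + (2 * u * \<zeta>)\<^sup>2)"
      by (rule power2_sum4_le)
    finally show ?thesis by (simp add: power_mult_distrib algebra_simps)
  qed
  then have "(1 / N) * (\<Sum>i\<in>UNIV. (norm ((\<Sum>j\<in>K i. p i j *\<^sub>R gf j (x i)) - gf i (x i)))\<^sup>2)
      \<le> (1 / N) * (\<Sum>i\<in>UNIV. 4 * u\<^sup>2 * (P\<^sup>2 + L\<^sup>2 * (e i)\<^sup>2 + L\<^sup>2 * m\<^sup>2 + 4 * \<zeta>\<^sup>2))"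
    using \<open>0 < N\<close> by (intro mult_left_mono sum_mono) auto
  also have "\<dots> = 4 * u\<^sup>2 * P\<^sup>2 + 4 * u\<^sup>2 * L\<^sup>2 * (S / N) + 4 * u\<^sup>2 * L\<^sup>2 * m\<^sup>2 + 16 * u\<^sup>2 * \<zeta>\<^sup>2"
    using \<open>0 < N\<close> by (simp add: S_def N_def sum.distrib sum_distrib_left[symmetric] algebra_simps)
  also have "\<dots> \<le> 4 * u\<^sup>2 * P\<^sup>2 + 4 * u\<^sup>2 * L\<^sup>2 * (S / N) + 4 * u\<^sup>2 * L\<^sup>2 * (S / N) + 16 * u\<^sup>2 * \<zeta>\<^sup>2"
  proof -
    have "m\<^sup>2 \<le> S / N"
      using sum_squared_le_sum_of_squares[of e UNIV] \<open>0 < N\<close>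
      by (simp add: m_def S_def N_def power_divide divide_le_eq power2_eq_square mult.commute)
    then have "4 * u\<^sup>2 * L\<^sup>2 * m\<^sup>2 \<le> 4 * u\<^sup>2 * L\<^sup>2 * (S / N)"
      by (rule mult_left_mono) simp
    then show ?thesis by (intro add_mono order_refl)
  qed
  finally show ?thesis
    using power2_norm_mean_le[of "UNIV :: 'n set" "\<lambda>i. (\<Sum>j\<in>K i. p i j *\<^sub>R gf j (x i)) - gf i (x i)"]
    by (simp add: N_def P_def S_def e_def algebra_simps)
qed

lemma power2_norm_mean_weighted_gradient_error_le:
  fixes x :: "'n::finite \<Rightarrow> 'v::real_normed_vector"
    and g :: "'n \<Rightarrow> 'n \<Rightarrow> 'w::real_normed_vector" and gf :: "'n \<Rightarrow> 'v \<Rightarrow> 'w"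
  assumes p: "\<And>i j. j \<in> K i \<Longrightarrow> 0 \<le> p i j" "\<And>i j. j \<in> K i \<Longrightarrow> p i j \<le> u"
      "\<And>i. (\<Sum>j\<in>K i. p i j) \<le> u"
    and "2 \<le> u"
    and lip: "\<And>k y z. norm (gf k y - gf k z) \<le> L * norm (y - z)" and "0 \<le> L"
    and het: "\<And>i y. norm (gf i y - (1 / real CARD('n)) *\<^sub>R (\<Sum>k\<in>UNIV. gf k y)) \<le> \<zeta>"
  shows "(norm ((1 / real CARD('n)) *\<^sub>R (\<Sum>i\<in>UNIV. (\<Sum>j\<in>K i. p i j *\<^sub>R g j i) - g i i)))\<^sup>2
    \<le> 3 * u\<^sup>2 / real CARD('n) * (\<Sum>i\<in>UNIV. \<Sum>j\<in>K i. (norm (g j i - gf j (x i)))\<^sup>2)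
      + 6 / real CARD('n) * (\<Sum>i\<in>UNIV. (norm (g i i - gf i (x i)))\<^sup>2)
      + 8 * \<zeta>\<^sup>2 * u ^ 4
      + 16 * L\<^sup>2 * u ^ 4 / real CARD('n) * (\<Sum>i\<in>UNIV. (norm (x i - c))\<^sup>2)
      + (8 * u ^ 4 + 2) * (norm ((1 / real CARD('n)) *\<^sub>R (\<Sum>i\<in>UNIV. gf i (x i))))\<^sup>2"
proof -
  define N where "N = real CARD('n)"
  define n where "n j i = g j i - gf j (x i)" for j i
  define A where "A = (\<Sum>i\<in>UNIV. \<Sum>j\<in>K i. (norm (n j i))\<^sup>2)"
  define B where "B = (\<Sum>i\<in>UNIV. (norm (n i i))\<^sup>2)"
  define P where "P = norm ((1 / N) *\<^sub>R (\<Sum>i\<in>UNIV. gf i (x i)))"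
  define S where "S = (\<Sum>i\<in>UNIV. (norm (x i - c))\<^sup>2)"
  define noise where "noise = (1 / N) *\<^sub>R (\<Sum>i\<in>UNIV. (\<Sum>j\<in>K i. p i j *\<^sub>R n j i) - n i i)"
  define drift where "drift = (1 / N) *\<^sub>R (\<Sum>i\<in>UNIV. (\<Sum>j\<in>K i. p i j *\<^sub>R gf j (x i)) - gf i (x i))"
  have "(\<Sum>j\<in>K i. p i j *\<^sub>R g j i) - g i i
      = ((\<Sum>j\<in>K i. p i j *\<^sub>R n j i) - n i i) + ((\<Sum>j\<in>K i. p i j *\<^sub>R gf j (x i)) - gf i (x i))" for i
    by (simp add: n_def scaleR_diff_right sum_subtractf)
  then have split: "(1 / N) *\<^sub>R (\<Sum>i\<in>UNIV. (\<Sum>j\<in>K i. p i j *\<^sub>R g j i) - g i i) = noise + drift"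
    by (simp add: noise_def drift_def sum.distrib scaleR_add_right)
  have noise_le: "(norm noise)\<^sup>2 \<le> 3 / 2 * u\<^sup>2 / N * A + 3 / N * B"
    unfolding noise_def N_def A_def B_def using p \<open>2 \<le> u\<close> by (intro power2_norm_mean_noise_le) auto
  have drift_le: "(norm drift)\<^sup>2 \<le> 4 * u\<^sup>2 * P\<^sup>2 + 8 * u\<^sup>2 * L\<^sup>2 / N * S + 16 * u\<^sup>2 * \<zeta>\<^sup>2"
    unfolding drift_def N_def P_def S_def
    using p(1,3) \<open>2 \<le> u\<close> lip \<open>0 \<le> L\<close> het by (intro power2_norm_mean_drift_le) auto
  have u4: "4 * u\<^sup>2 \<le> u ^ 4" using \<open>2 \<le> u\<close> by (rule four_mul_power2_le_power4)
  then have u2u4: "u\<^sup>2 \<le> u ^ 4" using zero_le_power2[of u] by linarith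
  have "(norm (noise + drift))\<^sup>2 \<le> 2 * (norm noise)\<^sup>2 + 2 * (norm drift)\<^sup>2"
    using power2_norm_add_le[of 1 noise drift] by simp
  also have "\<dots> \<le> 2 * (3 / 2 * u\<^sup>2 / N * A + 3 / N * B)
      + 2 * (4 * u\<^sup>2 * P\<^sup>2 + 8 * u\<^sup>2 * L\<^sup>2 / N * S + 16 * u\<^sup>2 * \<zeta>\<^sup>2)"
    using noise_le drift_le by (intro add_mono mult_left_mono) auto
  also have "\<dots> = 3 * u\<^sup>2 / N * A + 6 / N * B + 32 * u\<^sup>2 * \<zeta>\<^sup>2 + u\<^sup>2 * (16 * L\<^sup>2 / N * S)
      + 8 * u\<^sup>2 * P\<^sup>2"
    by (simp add: algebra_simps)
  also have "\<dots> \<le> 3 * u\<^sup>2 / N * A + 6 / N * B + 8 * \<zeta>\<^sup>2 * u ^ 4 + u ^ 4 * (16 * L\<^sup>2 / N * S)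
      + (8 * u ^ 4 + 2) * P\<^sup>2"
  proof (intro add_mono order_refl)
    show "32 * u\<^sup>2 * \<zeta>\<^sup>2 \<le> 8 * \<zeta>\<^sup>2 * u ^ 4"
      using mult_left_mono[OF u4, of "8 * \<zeta>\<^sup>2"] by (simp add: algebra_simps)
    show "u\<^sup>2 * (16 * L\<^sup>2 / N * S) \<le> u ^ 4 * (16 * L\<^sup>2 / N * S)"
      using u2u4 by (intro mult_right_mono) (simp_all add: N_def S_def sum_nonneg)
    show "8 * u\<^sup>2 * P\<^sup>2 \<le> (8 * u ^ 4 + 2) * P\<^sup>2"
      using u2u4 by (intro mult_right_mono) simp_all
  qed
  finally show ?thesis
    unfolding split[symmetric] by (simp add: N_def A_def B_def n_def P_def S_def ac_simps)
qed

lemma ross_gradient_error_le: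
  fixes W :: "real^'n::finite^'n" and gradF :: "'v::real_normed_vector \<Rightarrow> 's \<Rightarrow> 'v"
    and gradf :: "'n \<Rightarrow> 'v \<Rightarrow> 'v" and x :: "'n \<Rightarrow> 'v" and xi :: "'n \<Rightarrow> 's"
  assumes ds: "doubly_stochastic_sym W" and "omega_min W \<le> 1/2"
    and lip: "\<And>k y z. norm (gradf k y - gradf k z) \<le> L * norm (y - z)" and "0 \<le> L"
    and het: "\<And>i y. norm (gradf i y - (1 / real CARD('n)) *\<^sub>R (\<Sum>k\<in>UNIV. gradf k y)) \<le> \<zeta>"
  shows "(norm ((1 / real CARD('n)) *\<^sub>R
      (\<Sum>i\<in>UNIV. ross_gbar W gradF J Q \<gamma> x xi i - sg gradF x xi i i)))\<^sup>2
    \<le> 3 / (omega_min W)\<^sup>2 / real CARD('n)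
        * (\<Sum>i\<in>UNIV. \<Sum>j | 0 < W $ i $ j. (norm (gradF (x i) (xi j) - gradf j (x i)))\<^sup>2)
      + 6 / real CARD('n) * (\<Sum>i\<in>UNIV. (norm (gradF (x i) (xi i) - gradf i (x i)))\<^sup>2)
      + 8 * \<zeta>\<^sup>2 / omega_min W ^ 4
      + 16 * L\<^sup>2 / (real CARD('n) * omega_min W ^ 4)
        * (\<Sum>i\<in>UNIV. (norm (x i - (1 / real CARD('n)) *\<^sub>R (\<Sum>k\<in>UNIV. x k)))\<^sup>2)
      + (8 / omega_min W ^ 4 + 2) * (norm ((1 / real CARD('n)) *\<^sub>R (\<Sum>i\<in>UNIV. gradf i (x i))))\<^sup>2"
proof -
  define u where "u = 1 / omega_min W"
  have "2 \<le> u" unfolding u_def using ds \<open>omega_min W \<le> 1/2\<close> by (rule two_le_inverse_omega_min)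
  have "ross_gbar W gradF J Q \<gamma> x xi i - sg gradF x xi i i
      = (\<Sum>j | 0 < W $ i $ j. ross_weight W gradF J Q \<gamma> x xi i j *\<^sub>R gradF (x i) (xi j)) - gradF (x i) (xi i)"
    for i by (simp add: ross_gbar_eq_sum_row_support[OF ds] sg_def)
  moreover have "(norm ((1 / real CARD('n)) *\<^sub>R (\<Sum>i\<in>UNIV.
        (\<Sum>j | 0 < W $ i $ j. ross_weight W gradF J Q \<gamma> x xi i j *\<^sub>R gradF (x i) (xi j)) - gradF (x i) (xi i))))\<^sup>2
    \<le> 3 * u\<^sup>2 / real CARD('n)
        * (\<Sum>i\<in>UNIV. \<Sum>j | 0 < W $ i $ j. (norm (gradF (x i) (xi j) - gradf j (x i)))\<^sup>2)
      + 6 / real CARD('n) * (\<Sum>i\<in>UNIV. (norm (gradF (x i) (xi i) - gradf i (x i)))\<^sup>2)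
      + 8 * \<zeta>\<^sup>2 * u ^ 4
      + 16 * L\<^sup>2 * u ^ 4 / real CARD('n)
        * (\<Sum>i\<in>UNIV. (norm (x i - (1 / real CARD('n)) *\<^sub>R (\<Sum>k\<in>UNIV. x k)))\<^sup>2)
      + (8 * u ^ 4 + 2) * (norm ((1 / real CARD('n)) *\<^sub>R (\<Sum>i\<in>UNIV. gradf i (x i))))\<^sup>2"
    using \<open>2 \<le> u\<close> lip \<open>0 \<le> L\<close> het
    by (intro power2_norm_mean_weighted_gradient_error_le[where g="\<lambda>j i. gradF (x i) (xi j)"])
      (auto simp: u_def ds ross_weight_nonneg ross_weight_le sum_ross_weight_le nbhd_def)
  moreover have "3 * u\<^sup>2 / real CARD('n) = 3 / (omega_min W)\<^sup>2 / real CARD('n)"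
    "8 * \<zeta>\<^sup>2 * u ^ 4 = 8 * \<zeta>\<^sup>2 / omega_min W ^ 4"
    "16 * L\<^sup>2 * u ^ 4 / real CARD('n) = 16 * L\<^sup>2 / (real CARD('n) * omega_min W ^ 4)"
    "8 * u ^ 4 + 2 = 8 / omega_min W ^ 4 + 2"
    by (simp_all add: u_def power_one_over)
  ultimately show ?thesis by (simp only:)
qed

section \<open>Measurability and independence\<close>

lemma (in prob_space) nn_integral_fresh_coordinate_le:
  fixes X :: "'i \<Rightarrow> 'a \<Rightarrow> 'b" and h :: "('i \<Rightarrow> 'b) \<Rightarrow> ennreal"
  assumes indep: "indep_vars M' X I" and "finite I" "k \<in> I"
    and rv: "\<And>i. random_variable (M' i) (X i)" and law: "\<And>i. distr M (M' i) (X i) = M' i"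
    and h: "h \<in> borel_measurable (\<Pi>\<^sub>M i\<in>I. M' i)"
    and bound: "\<And>y. y \<in> space (\<Pi>\<^sub>M i\<in>I - {k}. M' i) \<Longrightarrow> (\<integral>\<^sup>+ z. h (y(k := z)) \<partial>M' k) \<le> B"
  shows "(\<integral>\<^sup>+ \<omega>. h (\<lambda>i\<in>I. X i \<omega>) \<partial>M) \<le> B"
proof -
  have prob: "prob_space (M' i)" for i
    using prob_space_distr[OF rv[of i]] by (simp add: law)
  interpret product_sigma_finite M'
    by (rule product_sigma_finite.intro) (simp add: prob prob_space_imp_sigma_finite)
  interpret rest: prob_space "\<Pi>\<^sub>M i\<in>I - {k}. M' i"
    by (rule prob_space_PiM) (simp add: prob)
  have "distr M (\<Pi>\<^sub>M i\<in>I. M' i) (\<lambda>\<omega>. \<lambda>i\<in>I. X i \<omega>) = (\<Pi>\<^sub>M i\<in>I. M' i)"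
    using indep indep_vars_iff_distr_eq_PiM[where I=I and M'=M' and X=X] rv \<open>k \<in> I\<close> by (auto simp: law)
  moreover have "(\<lambda>\<omega>. \<lambda>i\<in>I. X i \<omega>) \<in> measurable M (\<Pi>\<^sub>M i\<in>I. M' i)"
    by (intro measurable_restrict rv)
  ultimately have "(\<integral>\<^sup>+ \<omega>. h (\<lambda>i\<in>I. X i \<omega>) \<partial>M) = (\<integral>\<^sup>+ y. h y \<partial>(\<Pi>\<^sub>M i\<in>I. M' i))"
    using h by (metis nn_integral_distr)
  also have "\<dots> = (\<integral>\<^sup>+ y. (\<integral>\<^sup>+ z. h (y(k := z)) \<partial>M' k) \<partial>(\<Pi>\<^sub>M i\<in>I - {k}. M' i))"
    using product_nn_integral_insert[of "I - {k}" k h] \<open>finite I\<close> \<open>k \<in> I\<close> h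
    by (simp add: insert_absorb)
  also have "\<dots> \<le> (\<integral>\<^sup>+ y. B \<partial>(\<Pi>\<^sub>M i\<in>I - {k}. M' i))"
    by (intro nn_integral_mono bound)
  also have "\<dots> = B" by (simp add: rest.emeasure_space_1)
  finally show ?thesis .
qed

lemma ross_state_cong:
  assumes "\<And>a s. s \<le> n \<Longrightarrow> xi a s = xi' a s"
  shows "ross_state W gradF J Q \<gamma> \<alpha> x0 xi n = ross_state W gradF J Q \<gamma> \<alpha> x0 xi' n"
  using assms by (induction n) auto

context
  fixes Om :: "'w measure" and D :: "'n::finite \<Rightarrow> 's measure"
    and gradF :: "'v::euclidean_space \<Rightarrow> 's \<Rightarrow> 'v" and J :: "'s \<Rightarrow> 'v \<Rightarrow> real" and Q :: "'s set"
    and W :: "real^'n^'n" and \<gamma> :: real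
  assumes gradF_meas: "\<And>i. (\<lambda>p. gradF (fst p) (snd p)) \<in> borel_measurable (borel \<Otimes>\<^sub>M D i)"
    and J_meas: "\<And>q. q \<in> Q \<Longrightarrow> J q \<in> borel_measurable borel"
begin

context
  fixes x :: "'w \<Rightarrow> 'n \<Rightarrow> 'v" and z :: "'w \<Rightarrow> 'n \<Rightarrow> 's"
  assumes x_meas: "\<And>i. (\<lambda>\<omega>. x \<omega> i) \<in> borel_measurable Om"
    and z_meas: "\<And>a. (\<lambda>\<omega>. z \<omega> a) \<in> measurable Om (D a)"
begin

lemma measurable_sg: "(\<lambda>\<omega>. sg gradF (x \<omega>) (z \<omega>) j i) \<in> borel_measurable Om"
  unfolding sg_def using measurable_compose[OF measurable_Pair[OF x_meas[of i] z_meas[of j]] gradF_meas[of j]]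
  by simp

lemma measurable_coal_val: "(\<lambda>\<omega>. coal_val gradF J Q \<gamma> (x \<omega>) (z \<omega>) i S) \<in> borel_measurable Om"
proof (cases "S = {}")
  case False
  have mean: "(\<lambda>\<omega>. (1 / real (card S)) *\<^sub>R (\<Sum>j\<in>S. x \<omega> i - \<gamma> *\<^sub>R sg gradF (x \<omega>) (z \<omega>) j i))
      \<in> borel_measurable Om"
    by (intro borel_measurable_scaleR borel_measurable_const borel_measurable_sum borel_measurable_diff
        x_meas measurable_sg)
  then show ?thesis unfolding coal_val_def using False
    by (simp only: if_False)
      (intro borel_measurable_times borel_measurable_const borel_measurable_sum measurable_compose[OF mean] J_meas)
qed (simp add: coal_val_def)

lemma measurable_ross_gbar: "(\<lambda>\<omega>. ross_gbar W gradF J Q \<gamma> (x \<omega>) (z \<omega>) i) \<in> borel_measurable Om"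
  unfolding ross_gbar_def ross_weight_def shapley_norm_def shapley_def Let_def
  by (intro borel_measurable_sum borel_measurable_scaleR borel_measurable_divide borel_measurable_times
      borel_measurable_diff borel_measurable_const borel_measurable_Min borel_measurable_Max
      measurable_coal_val measurable_sg finite)

end

lemma measurable_ross_state:
  fixes xi :: "'n \<Rightarrow> nat \<Rightarrow> 'w \<Rightarrow> 's"
  assumes "\<And>a s. s \<le> n \<Longrightarrow> xi a s \<in> measurable Om (D a)"
  shows "(\<lambda>\<omega>. fst (ross_state W gradF J Q \<gamma> \<alpha> x0 (\<lambda>a s. xi a s \<omega>) n) i) \<in> borel_measurable Om"
proof -
  have "\<forall>i. (\<lambda>\<omega>. fst (ross_state W gradF J Q \<gamma> \<alpha> x0 (\<lambda>a s. xi a s \<omega>) n) i) \<in> borel_measurable Om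
      \<and> (\<lambda>\<omega>. snd (ross_state W gradF J Q \<gamma> \<alpha> x0 (\<lambda>a s. xi a s \<omega>) n) i) \<in> borel_measurable Om"
    using assms
  proof (induction n)
    case (Suc n)
    let ?x = "\<lambda>\<omega>. fst (ross_state W gradF J Q \<gamma> \<alpha> x0 (\<lambda>a s. xi a s \<omega>) n)"
    let ?u = "\<lambda>\<omega>. snd (ross_state W gradF J Q \<gamma> \<alpha> x0 (\<lambda>a s. xi a s \<omega>) n)"
    have x: "(\<lambda>\<omega>. ?x \<omega> i) \<in> borel_measurable Om" and u: "(\<lambda>\<omega>. ?u \<omega> i) \<in> borel_measurable Om" for i
      using Suc.IH Suc.prems by (simp_all add: le_SucI)
    have g: "(\<lambda>\<omega>. ross_gbar W gradF J Q \<gamma> (?x \<omega>) (\<lambda>a. xi a (Suc n) \<omega>) i) \<in> borel_measurable Om" for i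
      using x Suc.prems[of "Suc n"] by (intro measurable_ross_gbar) auto
    show ?case
      unfolding ross_state.simps ross_step_def Let_def fst_conv snd_conv
      by (intro allI conjI borel_measurable_sum borel_measurable_scaleR borel_measurable_const
          borel_measurable_diff borel_measurable_add x u g)
  qed simp
  then show ?thesis by simp
qed

end

lemma expected_sample_gradient_noise_le:
  fixes M :: "'w measure" and D :: "'n::finite \<Rightarrow> 's measure" and \<xi> :: "'n \<Rightarrow> nat \<Rightarrow> 'w \<Rightarrow> 's"
    and gradF :: "'v::euclidean_space \<Rightarrow> 's \<Rightarrow> 'v" and gradf :: "'n \<Rightarrow> 'v \<Rightarrow> 'v"
    and W :: "real^'n^'n"
  assumes "prob_space M"
    and samples_rv: "\<And>i s. \<xi> i s \<in> measurable M (D i)"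
    and samples_distr: "\<And>i s. distr M (D i) (\<xi> i s) = D i"
    and samples_indep: "prob_space.indep_vars M (\<lambda>p. D (fst p)) (\<lambda>p. \<xi> (fst p) (snd p)) UNIV"
    and J_meas: "\<And>q. q \<in> Q \<Longrightarrow> J q \<in> borel_measurable borel"
    and gradF_meas: "\<And>i. (\<lambda>p. gradF (fst p) (snd p)) \<in> borel_measurable (borel \<Otimes>\<^sub>M D i)"
    and gradf_meas: "\<And>j. gradf j \<in> borel_measurable borel"
    and variance: "\<And>j x. (\<integral>\<^sup>+ s. ennreal ((norm (gradF x s - gradf j x))\<^sup>2) \<partial>D j) \<le> ennreal (\<sigma>\<^sup>2)"
    and "1 \<le> t"
  shows "(\<integral>\<^sup>+ \<omega>. ennreal ((norm (
      gradF (fst (ross_state W gradF J Q \<gamma> \<alpha> x0 (\<lambda>a s. \<xi> a s \<omega>) (t - 1)) i) (\<xi> j t \<omega>)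
      - gradf j (fst (ross_state W gradF J Q \<gamma> \<alpha> x0 (\<lambda>a s. \<xi> a s \<omega>) (t - 1)) i)))\<^sup>2) \<partial>M)
    \<le> ennreal (\<sigma>\<^sup>2)"
proof -
  interpret prob_space M by fact
  define I :: "('n \<times> nat) set" where "I = UNIV \<times> {..t}"
  define Pi_D where "Pi_D = (\<Pi>\<^sub>M p\<in>I. D (fst p))"
  define G where "G y = fst (ross_state W gradF J Q \<gamma> \<alpha> x0 (\<lambda>a s. y (a, s)) (t - 1)) i"
    for y :: "'n \<times> nat \<Rightarrow> 's"
  define h where "h y = ennreal ((norm (gradF (G y) (y (j, t)) - gradf j (G y)))\<^sup>2)" for y
  have "(j, t) \<in> I" by (simp add: I_def)
  have G_samples: "G (\<lambda>p\<in>I. \<xi> (fst p) (snd p) \<omega>)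
      = fst (ross_state W gradF J Q \<gamma> \<alpha> x0 (\<lambda>a s. \<xi> a s \<omega>) (t - 1)) i" for \<omega>
    unfolding G_def by (rule arg_cong[where f="\<lambda>st. fst st i"], rule ross_state_cong) (auto simp: I_def)
  have G_fresh: "G (y((j, t) := z)) = G y" for y z
    \<comment> \<open>the models of round t - 1 never look at the samples of round t\<close>
    unfolding G_def using \<open>1 \<le> t\<close> by (intro arg_cong[where f="\<lambda>st. fst st i"] ross_state_cong) auto
  have coord: "(\<lambda>y. y (a, s)) \<in> measurable Pi_D (D a)" if "s \<le> t - 1" for a s
    using measurable_component_singleton[of "(a, s)" I "\<lambda>p. D (fst p)"] that
    by (simp add: Pi_D_def I_def)
  have G: "G \<in> borel_measurable Pi_D"
    unfolding G_def using measurable_ross_state[where xi="\<lambda>a s y. y (a, s)", OF gradF_meas J_meas coord]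
    by simp
  have "(\<lambda>y. y (j, t)) \<in> measurable Pi_D (D j)"
    using measurable_component_singleton[OF \<open>(j, t) \<in> I\<close>, of "\<lambda>p. D (fst p)"] by (simp add: Pi_D_def)
  then have "(\<lambda>y. gradF (G y) (y (j, t))) \<in> borel_measurable Pi_D"
    using measurable_compose[OF measurable_Pair[OF G] gradF_meas[of j]] by simp
  then have h: "h \<in> borel_measurable Pi_D"
    unfolding h_def using measurable_compose[OF G gradf_meas[of j]]
    by (intro measurable_compose[OF _ measurable_ennreal] borel_measurable_power
        measurable_compose[OF _ borel_measurable_norm] borel_measurable_diff)
  have "(\<integral>\<^sup>+ \<omega>. h (\<lambda>p\<in>I. \<xi> (fst p) (snd p) \<omega>) \<partial>M) \<le> ennreal (\<sigma>\<^sup>2)"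
  proof (rule nn_integral_fresh_coordinate_le)
    show "h \<in> borel_measurable (\<Pi>\<^sub>M p\<in>I. D (fst p))" using h by (simp add: Pi_D_def)
    show "indep_vars (\<lambda>p. D (fst p)) (\<lambda>p. \<xi> (fst p) (snd p)) I"
      using samples_indep by (rule indep_vars_subset) simp
    fix y
    show "(\<integral>\<^sup>+ z. h (y((j, t) := z)) \<partial>D (fst (j, t))) \<le> ennreal (\<sigma>\<^sup>2)"
      using variance[of j "G y"] by (simp add: h_def G_fresh)
  qed (simp_all add: I_def samples_rv samples_distr)
  then show ?thesis
    using \<open>(j, t) \<in> I\<close> by (simp add: h_def G_samples)
qed

section \<open>Expectations\<close>

lemma nn_integral_sum_le:
  fixes f :: "'i \<Rightarrow> 'a \<Rightarrow> real"
  assumes "finite A" "\<And>k. k \<in> A \<Longrightarrow> f k \<in> borel_measurable M" "\<And>k \<omega>. k \<in> A \<Longrightarrow> 0 \<le> f k \<omega>"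
    and "\<And>k. k \<in> A \<Longrightarrow> (\<integral>\<^sup>+ \<omega>. ennreal (f k \<omega>) \<partial>M) \<le> ennreal B" "0 \<le> B"
  shows "(\<integral>\<^sup>+ \<omega>. ennreal (\<Sum>k\<in>A. f k \<omega>) \<partial>M) \<le> ennreal (real (card A) * B)"
proof -
  have "(\<integral>\<^sup>+ \<omega>. ennreal (\<Sum>k\<in>A. f k \<omega>) \<partial>M) = (\<Sum>k\<in>A. \<integral>\<^sup>+ \<omega>. ennreal (f k \<omega>) \<partial>M)"
    using assms(1-3) by (simp add: nn_integral_sum flip: sum_ennreal)
  also have "\<dots> \<le> (\<Sum>k\<in>A. ennreal B)" using assms(4) by (rule sum_mono)
  also have "\<dots> = ennreal (real (card A) * B)"
    using \<open>0 \<le> B\<close> by (simp add: ennreal_mult ennreal_of_nat_eq_real_of_nat)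
  finally show ?thesis .
qed

lemma (in prob_space) nn_integral_noise_terms_le:
  fixes n2 :: "'a \<Rightarrow> 'n::finite \<Rightarrow> 'n \<Rightarrow> real"
  assumes meas: "\<And>i j. (\<lambda>\<omega>. n2 \<omega> i j) \<in> borel_measurable M" and nonneg: "\<And>\<omega> i j. 0 \<le> n2 \<omega> i j"
    and bound: "\<And>i j. (\<integral>\<^sup>+ \<omega>. ennreal (n2 \<omega> i j) \<partial>M) \<le> ennreal (\<sigma>\<^sup>2)"
    and card: "\<And>i. real (card (K i)) \<le> u" and "2 \<le> u"
  shows "(\<integral>\<^sup>+ \<omega>. ennreal (3 * u\<^sup>2 / real CARD('n) * (\<Sum>i\<in>UNIV. \<Sum>j\<in>K i. n2 \<omega> i j)
      + 6 / real CARD('n) * (\<Sum>i\<in>UNIV. n2 \<omega> i i)) \<partial>M) \<le> ennreal (2 * \<sigma>\<^sup>2 * u ^ 4)"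
proof -
  define N where "N = real CARD('n)"
  define a where "a = 3 * u\<^sup>2 / N"
  define b where "b = 6 / N"
  have "0 \<le> a" "0 \<le> b" "0 < N" by (simp_all add: a_def b_def N_def)
  have double: "(\<Sum>i\<in>UNIV. \<Sum>j\<in>K i. n2 \<omega> i j) = (\<Sum>p\<in>Sigma UNIV K. n2 \<omega> (fst p) (snd p))" for \<omega>
    by (simp add: sum.Sigma case_prod_unfold)
  have "real (card (Sigma UNIV K)) = (\<Sum>i\<in>UNIV. real (card (K i)))"
    by (simp add: card_SigmaI)
  also have "\<dots> \<le> N * u" using sum_mono[of UNIV "\<lambda>i. real (card (K i))" "\<lambda>_. u"] card by (simp add: N_def)
  finally have card_Sigma: "real (card (Sigma UNIV K)) \<le> N * u" .
  have "(\<integral>\<^sup>+ \<omega>. ennreal (a * (\<Sum>i\<in>UNIV. \<Sum>j\<in>K i. n2 \<omega> i j) + b * (\<Sum>i\<in>UNIV. n2 \<omega> i i)) \<partial>M)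
      = ennreal a * (\<integral>\<^sup>+ \<omega>. ennreal (\<Sum>p\<in>Sigma UNIV K. n2 \<omega> (fst p) (snd p)) \<partial>M)
        + ennreal b * (\<integral>\<^sup>+ \<omega>. ennreal (\<Sum>i\<in>UNIV. n2 \<omega> i i) \<partial>M)"
    using \<open>0 \<le> a\<close> \<open>0 \<le> b\<close> nonneg meas
    by (simp add: double ennreal_mult sum_nonneg nn_integral_add nn_integral_cmult)
  also have "\<dots> \<le> ennreal a * ennreal (real (card (Sigma UNIV K)) * \<sigma>\<^sup>2) + ennreal b * ennreal (N * \<sigma>\<^sup>2)"
    unfolding N_def using meas nonneg bound by (intro add_mono mult_left_mono nn_integral_sum_le) auto
  also have "\<dots> = ennreal (a * real (card (Sigma UNIV K)) * \<sigma>\<^sup>2) + ennreal (b * N * \<sigma>\<^sup>2)"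
    using \<open>0 \<le> a\<close> \<open>0 \<le> b\<close> \<open>0 < N\<close> by (simp add: ennreal_mult' mult.assoc)
  also have "\<dots> = ennreal (a * real (card (Sigma UNIV K)) * \<sigma>\<^sup>2 + b * N * \<sigma>\<^sup>2)"
    using \<open>0 \<le> a\<close> \<open>0 \<le> b\<close> \<open>0 < N\<close> by (intro ennreal_plus[symmetric]) (auto intro!: mult_nonneg_nonneg sum_nonneg)
  also have "\<dots> \<le> ennreal (2 * \<sigma>\<^sup>2 * u ^ 4)"
  proof (rule ennreal_leI)
    have "a * real (card (Sigma UNIV K)) \<le> a * (N * u)" using card_Sigma \<open>0 \<le> a\<close> by (rule mult_left_mono)
    also have "\<dots> = 3 * u ^ 3" using \<open>0 < N\<close> by (simp add: a_def power2_eq_square power3_eq_cube)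
    finally have "a * real (card (Sigma UNIV K)) + b * N \<le> 3 * u ^ 3 + 6"
      using \<open>0 < N\<close> by (simp add: b_def)
    also have "\<dots> \<le> 2 * u ^ 4" using \<open>2 \<le> u\<close> by (rule three_mul_power3_add_six_le_power4)
    finally show "a * real (card (Sigma UNIV K)) * \<sigma>\<^sup>2 + b * N * \<sigma>\<^sup>2 \<le> 2 * \<sigma>\<^sup>2 * u ^ 4"
      using mult_right_mono[of _ _ "\<sigma>\<^sup>2"] by (fastforce simp: algebra_simps)
  qed
  finally show ?thesis by (simp add: a_def b_def N_def)
qed

lemma (in prob_space) expected_row_support_noise_le:
  fixes W :: "real^'n::finite^'n" and n2 :: "'a \<Rightarrow> 'n \<Rightarrow> 'n \<Rightarrow> real"
  assumes ds: "doubly_stochastic_sym W" and "omega_min W \<le> 1/2"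
    and meas: "\<And>i j. (\<lambda>\<omega>. n2 \<omega> i j) \<in> borel_measurable M" and nonneg: "\<And>\<omega> i j. 0 \<le> n2 \<omega> i j"
    and bound: "\<And>i j. (\<integral>\<^sup>+ \<omega>. ennreal (n2 \<omega> i j) \<partial>M) \<le> ennreal (\<sigma>\<^sup>2)"
  shows "(\<integral>\<^sup>+ \<omega>. ennreal (3 / (omega_min W)\<^sup>2 / real CARD('n) * (\<Sum>i\<in>UNIV. \<Sum>j | 0 < W $ i $ j. n2 \<omega> i j)
      + 6 / real CARD('n) * (\<Sum>i\<in>UNIV. n2 \<omega> i i)) \<partial>M) \<le> ennreal (2 * \<sigma>\<^sup>2 / omega_min W ^ 4)"
proof -
  have "0 < omega_min W" using ds by (rule omega_min_pos)
  then have "real (card {j. 0 < W $ i $ j}) \<le> 1 / omega_min W" for i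
    using card_row_support_le[OF ds, of i] by (simp add: field_simps)
  from nn_integral_noise_terms_le[OF meas nonneg bound this two_le_inverse_omega_min[OF assms(1,2)]]
  show ?thesis by (simp add: power_one_over)
qed

lemma (in prob_space) nn_integral_le_affine_bound:
  fixes f r p :: "'a \<Rightarrow> real" and d :: "'i \<Rightarrow> 'a \<Rightarrow> real"
  assumes bound: "\<And>\<omega>. f \<omega> \<le> r \<omega> + c + a * (\<Sum>i\<in>I. d i \<omega>) + b * p \<omega>"
    and meas: "r \<in> borel_measurable M" "\<And>i. d i \<in> borel_measurable M" "p \<in> borel_measurable M"
    and nonneg: "\<And>\<omega>. 0 \<le> r \<omega>" "\<And>i \<omega>. 0 \<le> d i \<omega>" "\<And>\<omega>. 0 \<le> p \<omega>" "0 \<le> a" "0 \<le> b" "0 \<le> c"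
  shows "(\<integral>\<^sup>+ \<omega>. ennreal (f \<omega>) \<partial>M) \<le> (\<integral>\<^sup>+ \<omega>. ennreal (r \<omega>) \<partial>M) + ennreal c
      + ennreal a * (\<Sum>i\<in>I. \<integral>\<^sup>+ \<omega>. ennreal (d i \<omega>) \<partial>M) + ennreal b * (\<integral>\<^sup>+ \<omega>. ennreal (p \<omega>) \<partial>M)"
proof -
  note [measurable] = meas
  have "(\<integral>\<^sup>+ \<omega>. ennreal (f \<omega>) \<partial>M) \<le> (\<integral>\<^sup>+ \<omega>. ennreal (r \<omega>) + ennreal c
      + ennreal a * (\<Sum>i\<in>I. ennreal (d i \<omega>)) + ennreal b * ennreal (p \<omega>) \<partial>M)"
  proof (rule nn_integral_mono)
    fix \<omega>
    have "ennreal (f \<omega>) \<le> ennreal (r \<omega> + c + a * (\<Sum>i\<in>I. d i \<omega>) + b * p \<omega>)"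
      by (rule ennreal_leI) (rule bound)
    also have "\<dots> = ennreal (r \<omega>) + ennreal c + ennreal a * (\<Sum>i\<in>I. ennreal (d i \<omega>)) + ennreal b * ennreal (p \<omega>)"
      using nonneg by (simp add: ennreal_mult sum_nonneg)
    finally show "ennreal (f \<omega>) \<le> \<dots>" .
  qed
  also have "\<dots> = (\<integral>\<^sup>+ \<omega>. ennreal (r \<omega>) \<partial>M) + ennreal c
      + ennreal a * (\<Sum>i\<in>I. \<integral>\<^sup>+ \<omega>. ennreal (d i \<omega>) \<partial>M) + ennreal b * (\<integral>\<^sup>+ \<omega>. ennreal (p \<omega>) \<partial>M)"
  proof -
    have "(\<lambda>\<omega>. ennreal (r \<omega>)) \<in> borel_measurable M" "(\<lambda>\<omega>. ennreal (p \<omega>)) \<in> borel_measurable M"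
      "(\<lambda>\<omega>. ennreal (d i \<omega>)) \<in> borel_measurable M" for i
      by measurable
    then show ?thesis
      by (simp add: nn_integral_add nn_integral_cmult nn_integral_sum emeasure_space_1 borel_measurable_add
          borel_measurable_sum borel_measurable_times_ennreal)
  qed
  finally show ?thesis .
qed

lemma (in prob_space) expected_ross_gradient_error_le:
  fixes W :: "real^'n::finite^'n" and gradF :: "'v::euclidean_space \<Rightarrow> 's \<Rightarrow> 'v"
    and gradf :: "'n \<Rightarrow> 'v \<Rightarrow> 'v" and X :: "'a \<Rightarrow> 'n \<Rightarrow> 'v" and Z :: "'a \<Rightarrow> 'n \<Rightarrow> 's"
  assumes ds: "doubly_stochastic_sym W" and "omega_min W \<le> 1/2"
    and lip: "\<And>k y z. norm (gradf k y - gradf k z) \<le> L * norm (y - z)" and "0 \<le> L"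
    and het: "\<And>i y. norm (gradf i y - (1 / real CARD('n)) *\<^sub>R (\<Sum>k\<in>UNIV. gradf k y)) \<le> \<zeta>"
    and X_meas: "\<And>i. (\<lambda>\<omega>. X \<omega> i) \<in> borel_measurable M"
    and Z_meas: "\<And>a. (\<lambda>\<omega>. Z \<omega> a) \<in> measurable M (D a)"
    and gradF_meas: "\<And>i. (\<lambda>p. gradF (fst p) (snd p)) \<in> borel_measurable (borel \<Otimes>\<^sub>M D i)"
    and gradf_meas: "\<And>j. gradf j \<in> borel_measurable borel"
    and noise: "\<And>i j. (\<integral>\<^sup>+ \<omega>. ennreal ((norm (gradF (X \<omega> i) (Z \<omega> j) - gradf j (X \<omega> i)))\<^sup>2) \<partial>M)
      \<le> ennreal (\<sigma>\<^sup>2)"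
  shows "(\<integral>\<^sup>+ \<omega>. ennreal ((norm ((1 / real CARD('n)) *\<^sub>R
        (\<Sum>i\<in>UNIV. ross_gbar W gradF J Q \<gamma> (X \<omega>) (Z \<omega>) i - sg gradF (X \<omega>) (Z \<omega>) i i)))\<^sup>2) \<partial>M)
    \<le> ennreal (2 * \<sigma>\<^sup>2 / omega_min W ^ 4 + 2 * \<sigma>\<^sup>2 / real CARD('n) + 8 * \<zeta>\<^sup>2 / omega_min W ^ 4)
      + ennreal (16 * L\<^sup>2 / (real CARD('n) * omega_min W ^ 4)) *
        (\<Sum>i\<in>UNIV. \<integral>\<^sup>+ \<omega>. ennreal ((norm (X \<omega> i - (1 / real CARD('n)) *\<^sub>R (\<Sum>k\<in>UNIV. X \<omega> k)))\<^sup>2) \<partial>M)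
      + ennreal (8 / omega_min W ^ 4 + 2) *
        (\<integral>\<^sup>+ \<omega>. ennreal ((norm ((1 / real CARD('n)) *\<^sub>R (\<Sum>i\<in>UNIV. gradf i (X \<omega> i))))\<^sup>2) \<partial>M)"
proof -
  define n2 where "n2 \<omega> i j = (norm (gradF (X \<omega> i) (Z \<omega> j) - gradf j (X \<omega> i)))\<^sup>2" for \<omega> i j
  define noise_terms where "noise_terms \<omega> =
      3 / (omega_min W)\<^sup>2 / real CARD('n) * (\<Sum>i\<in>UNIV. \<Sum>j | 0 < W $ i $ j. n2 \<omega> i j)
      + 6 / real CARD('n) * (\<Sum>i\<in>UNIV. n2 \<omega> i i)" for \<omega>
  have n2_meas: "(\<lambda>\<omega>. n2 \<omega> i j) \<in> borel_measurable M" for i j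
  proof -
    have "(\<lambda>\<omega>. gradF (X \<omega> i) (Z \<omega> j)) \<in> borel_measurable M"
      using measurable_compose[OF measurable_Pair[OF X_meas Z_meas] gradF_meas[of j]] by simp
    then show ?thesis
      unfolding n2_def using measurable_compose[OF X_meas gradf_meas] by measurable
  qed
  have noise_terms_le: "(\<integral>\<^sup>+ \<omega>. ennreal (noise_terms \<omega>) \<partial>M) \<le> ennreal (2 * \<sigma>\<^sup>2 / omega_min W ^ 4)"
    unfolding noise_terms_def using ds \<open>omega_min W \<le> 1/2\<close> n2_meas _ noise[folded n2_def]
    by (rule expected_row_support_noise_le) (simp add: n2_def)
  have "(\<integral>\<^sup>+ \<omega>. ennreal ((norm ((1 / real CARD('n)) *\<^sub>R
        (\<Sum>i\<in>UNIV. ross_gbar W gradF J Q \<gamma> (X \<omega>) (Z \<omega>) i - sg gradF (X \<omega>) (Z \<omega>) i i)))\<^sup>2) \<partial>M)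
    \<le> (\<integral>\<^sup>+ \<omega>. ennreal (noise_terms \<omega>) \<partial>M) + ennreal (8 * \<zeta>\<^sup>2 / omega_min W ^ 4)
      + ennreal (16 * L\<^sup>2 / (real CARD('n) * omega_min W ^ 4)) *
        (\<Sum>i\<in>UNIV. \<integral>\<^sup>+ \<omega>. ennreal ((norm (X \<omega> i - (1 / real CARD('n)) *\<^sub>R (\<Sum>k\<in>UNIV. X \<omega> k)))\<^sup>2) \<partial>M)
      + ennreal (8 / omega_min W ^ 4 + 2) *
        (\<integral>\<^sup>+ \<omega>. ennreal ((norm ((1 / real CARD('n)) *\<^sub>R (\<Sum>i\<in>UNIV. gradf i (X \<omega> i))))\<^sup>2) \<partial>M)"
  proof (rule nn_integral_le_affine_bound)
    show "(\<lambda>\<omega>. (norm (X \<omega> i - (1 / real CARD('n)) *\<^sub>R (\<Sum>k\<in>UNIV. X \<omega> k)))\<^sup>2) \<in> borel_measurable M"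
      and "(\<lambda>\<omega>. (norm ((1 / real CARD('n)) *\<^sub>R (\<Sum>i\<in>UNIV. gradf i (X \<omega> i))))\<^sup>2) \<in> borel_measurable M"
      and "noise_terms \<in> borel_measurable M" for i
      unfolding noise_terms_def
      by (intro borel_measurable_power measurable_compose[OF _ borel_measurable_norm] borel_measurable_diff
          borel_measurable_scaleR borel_measurable_add borel_measurable_times borel_measurable_const
          borel_measurable_sum X_meas measurable_compose[OF X_meas gradf_meas] n2_meas)+
  qed (use ross_gradient_error_le[OF ds \<open>omega_min W \<le> 1/2\<close> lip \<open>0 \<le> L\<close> het] omega_min_pos[OF ds] in
      \<open>auto simp: noise_terms_def n2_def sg_def sum_nonneg\<close>)
  also have "\<dots> \<le> ennreal (2 * \<sigma>\<^sup>2 / omega_min W ^ 4 + 2 * \<sigma>\<^sup>2 / real CARD('n) + 8 * \<zeta>\<^sup>2 / omega_min W ^ 4)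
      + ennreal (16 * L\<^sup>2 / (real CARD('n) * omega_min W ^ 4)) *
        (\<Sum>i\<in>UNIV. \<integral>\<^sup>+ \<omega>. ennreal ((norm (X \<omega> i - (1 / real CARD('n)) *\<^sub>R (\<Sum>k\<in>UNIV. X \<omega> k)))\<^sup>2) \<partial>M)
      + ennreal (8 / omega_min W ^ 4 + 2) *
        (\<integral>\<^sup>+ \<omega>. ennreal ((norm ((1 / real CARD('n)) *\<^sub>R (\<Sum>i\<in>UNIV. gradf i (X \<omega> i))))\<^sup>2) \<partial>M)"
  proof -
    have "(\<integral>\<^sup>+ \<omega>. ennreal (noise_terms \<omega>) \<partial>M) + ennreal (8 * \<zeta>\<^sup>2 / omega_min W ^ 4)
        \<le> ennreal (2 * \<sigma>\<^sup>2 / omega_min W ^ 4) + ennreal (8 * \<zeta>\<^sup>2 / omega_min W ^ 4)"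
      using noise_terms_le by (rule add_right_mono)
    also have "\<dots> \<le> ennreal (2 * \<sigma>\<^sup>2 / omega_min W ^ 4 + 2 * \<sigma>\<^sup>2 / real CARD('n) + 8 * \<zeta>\<^sup>2 / omega_min W ^ 4)"
      using omega_min_pos[OF ds] by (subst ennreal_plus[symmetric]) (auto intro!: ennreal_leI)
    finally show ?thesis by (intro add_right_mono)
  qed
  finally show ?thesis .
qed

theorem lemma1:
  fixes M :: "'w measure"
    and D :: "'n::finite \<Rightarrow> 's measure"
    and \<xi> :: "'n \<Rightarrow> nat \<Rightarrow> 'w \<Rightarrow> 's"
    and F :: "'v::euclidean_space \<Rightarrow> 's \<Rightarrow> real"
    and gradF :: "'v \<Rightarrow> 's \<Rightarrow> 'v"
    and gradf :: "'n \<Rightarrow> 'v \<Rightarrow> 'v"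
    and J :: "'s \<Rightarrow> 'v \<Rightarrow> real"
    and Q :: "'s set"
    and W :: "real^'n^'n"
    and \<gamma> \<alpha> L \<sigma> \<zeta> \<rho> :: real
    and x0 :: 'v
    and t :: nat
  assumes W_ds: "doubly_stochastic_sym W"
    and M_prob: "prob_space M"
    and samples_rv: "\<And>i s. \<xi> i s \<in> measurable M (D i)"
    and samples_distr: "\<And>i s. distr M (D i) (\<xi> i s) = D i"
    and samples_indep: "prob_space.indep_vars M (\<lambda>p. D (fst p)) (\<lambda>p. \<xi> (fst p) (snd p)) UNIV"
    and Q_fin: "finite Q" and Q_ne: "Q \<noteq> {}"
    and J_meas: "\<And>q. q \<in> Q \<Longrightarrow> J q \<in> borel_measurable borel"
    and gradF_meas: "\<And>i. (\<lambda>p. gradF (fst p) (snd p)) \<in> borel_measurable (borel \<Otimes>\<^sub>M D i)"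
    and F_grad: "\<And>x s. GDERIV (\<lambda>y. F y s) x :> gradF x s"
    and F_int: "\<And>i x. integrable (D i) (\<lambda>s. F x s)"
    and f_grad: "\<And>i x. GDERIV (\<lambda>y. \<integral>s. F y s \<partial>D i) x :> gradf i x"
    and f_grad_unbiased: "\<And>i x. gradf i x = (\<integral>s. gradF x s \<partial>D i)"
    and A1: "\<And>i x y. norm (gradf i x - gradf i y) \<le> L * norm (x - y)"
    and A2_pos: "\<sigma> > 0" "\<zeta> > 0"
    and A2_var: "\<And>i x. (\<integral>\<^sup>+ s. ennreal ((norm (gradF x s - gradf i x))\<^sup>2) \<partial>D i) \<le> ennreal (\<sigma>\<^sup>2)"
    and A2_het: "\<And>i x. (norm (gradf i x - (1 / real CARD('n)) *\<^sub>R (\<Sum>k\<in>UNIV. gradf k x)))\<^sup>2 \<le> \<zeta>\<^sup>2"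
    and A3_top: "eig_k W 1 = 1"
    and A3_gap: "max \<bar>eig_k W 2\<bar> \<bar>eig_k W CARD('n)\<bar> \<le> sqrt \<rho>"
    and A3_rho: "\<rho> < 1"
    and gamma_pos: "\<gamma> > 0"
    and t_pos: "t \<ge> 1"
  shows "(\<integral>\<^sup>+ \<omega>. ennreal ((norm ((1 / real CARD('n)) *\<^sub>R
              (\<Sum>i\<in>UNIV.
                 ross_gbar W gradF J Q \<gamma>
                   (fst (ross_state W gradF J Q \<gamma> \<alpha> x0 (\<lambda>a s. \<xi> a s \<omega>) (t - 1)))
                   (\<lambda>a. \<xi> a t \<omega>) i
               - sg gradF (fst (ross_state W gradF J Q \<gamma> \<alpha> x0 (\<lambda>a s. \<xi> a s \<omega>) (t - 1)))
                   (\<lambda>a. \<xi> a t \<omega>) i i)))\<^sup>2) \<partial>M)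
     \<le> ennreal (2 * \<sigma>\<^sup>2 / omega_min W ^ 4 + 2 * \<sigma>\<^sup>2 / real CARD('n) + 8 * \<zeta>\<^sup>2 / omega_min W ^ 4)
       + ennreal (16 * L\<^sup>2 / (real CARD('n) * omega_min W ^ 4)) *
           (\<Sum>i\<in>UNIV. \<integral>\<^sup>+ \<omega>. ennreal ((norm (
               fst (ross_state W gradF J Q \<gamma> \<alpha> x0 (\<lambda>a s. \<xi> a s \<omega>) (t - 1)) i
               - (1 / real CARD('n)) *\<^sub>R
                   (\<Sum>k\<in>UNIV. fst (ross_state W gradF J Q \<gamma> \<alpha> x0 (\<lambda>a s. \<xi> a s \<omega>) (t - 1)) k)))\<^sup>2) \<partial>M)
       + ennreal (8 / omega_min W ^ 4 + 2) *
           (\<integral>\<^sup>+ \<omega>. ennreal ((norm ((1 / real CARD('n)) *\<^sub>R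
               (\<Sum>i\<in>UNIV. gradf i (fst (ross_state W gradF J Q \<gamma> \<alpha> x0 (\<lambda>a s. \<xi> a s \<omega>) (t - 1)) i))))\<^sup>2) \<partial>M)"
proof -
  interpret prob_space M by (rule M_prob)
  have "0 \<le> L" using A1 by (rule lipschitz_bound_nonneg)
  have gradf_meas: "gradf j \<in> borel_measurable borel" for j
    using A1 \<open>0 \<le> L\<close> by (rule borel_measurable_lipschitz_bound)
  have het: "norm (gradf i y - (1 / real CARD('n)) *\<^sub>R (\<Sum>k\<in>UNIV. gradf k y)) \<le> \<zeta>" for i y
    using power2_le_imp_le[OF A2_het] A2_pos(2) by simp
  have X_meas: "(\<lambda>\<omega>. fst (ross_state W gradF J Q \<gamma> \<alpha> x0 (\<lambda>a s. \<xi> a s \<omega>) (t - 1)) i) \<in> borel_measurable M"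
    for i using samples_rv by (intro measurable_ross_state[OF gradF_meas J_meas])
  show ?thesis
    using expected_ross_gradient_error_le[OF W_ds omega_min_le_half[OF W_ds A3_gap A3_rho] A1 \<open>0 \<le> L\<close> het
        X_meas samples_rv gradF_meas gradf_meas
        expected_sample_gradient_noise_le[OF M_prob samples_rv samples_distr samples_indep J_meas gradF_meas
          gradf_meas A2_var t_pos]]
    by simp
qed

end
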